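(* Let $X=(X_1,\ldots,X_d)$, $d\ge2$, be a centered Gaussian random vector with positive definite covariance matrix $\Gamma=(\gamma_{jk})_{j,k=1}^d$. Then $$\mathbb{E}\Big[\min_{j=1,\ldots,d}\exp\big(X_j-\tfrac12\gamma_{jj}\big)\Big]=\sum_{j=1}^d\Phi_{d-1}\Big(\big(-\tfrac12\operatorname{var}(\Delta^{(j)}_k)\big)_{k:k\ne j};\ \operatorname{cov}(\Delta^{(j)})\Big),$$ where $\Delta^{(j)}=(\Delta^{(j)}_k)_{k:k\ne j}$ with $\Delta^{(j)}_k=X_j-X_k$.
   Context: $\Phi_r(\mathbf{a};\Sigma)$ denotes the cumulative distribution function, evaluated at $\mathbf{a}\in\mathbb{R}^r$, of the $r$-variate centered normal distribution with covariance matrix $\Sigma$. *)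

theory Defs
  imports "HOL-Probability.Probability" "Jordan_Normal_Form.Determinant"
    "Jordan_Normal_Form.Gauss_Jordan_Elimination"
begin

text \<open>Vectors in R^r are functions on the index set {..<r}; the measurable space
  of such vectors is the product PiM {..<r} (\<lambda>_. lborel).
  An r x r matrix is a function nat => nat => real (only indices < r matter).\<close>

definition sq_matrix :: "nat \<Rightarrow> (nat \<Rightarrow> nat \<Rightarrow> real) \<Rightarrow> real mat" where
  "sq_matrix r S = Matrix.mat r r (\<lambda>(i, k). S i k)"

definition pos_def_mat :: "nat \<Rightarrow> (nat \<Rightarrow> nat \<Rightarrow> real) \<Rightarrow> bool" where
  "pos_def_mat r S \<longleftrightarrow>
     (\<forall>i<r. \<forall>k<r. S i k = S k i) \<and>
     (\<forall>x::nat \<Rightarrow> real. (\<exists>i<r. x i \<noteq> 0) \<longrightarrow> (\<Sum>i<r. \<Sum>k<r. x i * S i k * x k) > 0)"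

definition gauss_density :: "nat \<Rightarrow> (nat \<Rightarrow> nat \<Rightarrow> real) \<Rightarrow> (nat \<Rightarrow> real) \<Rightarrow> real" where
  "gauss_density r S x =
     (let Sinv = the (mat_inverse (sq_matrix r S)) in
       (2 * pi) powr (- real r / 2) * Determinant.det (sq_matrix r S) powr (- 1 / 2) *
       exp (- (1 / 2) * (\<Sum>i<r. \<Sum>k<r. x i * Sinv $$ (i, k) * x k)))"

definition gauss_measure :: "nat \<Rightarrow> (nat \<Rightarrow> nat \<Rightarrow> real) \<Rightarrow> (nat \<Rightarrow> real) measure" where
  "gauss_measure r S = density (PiM {..<r} (\<lambda>_. lborel)) (\<lambda>x. ennreal (gauss_density r S x))"

definition Phi :: "nat \<Rightarrow> (nat \<Rightarrow> real) \<Rightarrow> (nat \<Rightarrow> nat \<Rightarrow> real) \<Rightarrow> real" where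
  "Phi r a S = measure (gauss_measure r S)
     {x \<in> space (PiM {..<r} (\<lambda>_. lborel)). \<forall>i<r. x i \<le> a i}"

definition covar :: "'a measure \<Rightarrow> ('a \<Rightarrow> real) \<Rightarrow> ('a \<Rightarrow> real) \<Rightarrow> real" where
  "covar M U V = (\<integral>\<omega>. (U \<omega> - (\<integral>\<omega>'. U \<omega>' \<partial>M)) * (V \<omega> - (\<integral>\<omega>'. V \<omega>' \<partial>M)) \<partial>M)"

definition var :: "'a measure \<Rightarrow> ('a \<Rightarrow> real) \<Rightarrow> real" where
  "var M U = covar M U U"

text \<open>Enumeration of {k. k \<noteq> j} in increasing order: index i < d-1 corresponds to k.\<close>
definition skip :: "nat \<Rightarrow> nat \<Rightarrow> nat" where
  "skip j i = (if i < j then i else Suc i)"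

end

theory Submission
  imports Defs
begin

text \<open>
  Let \<open>P = \<Gamma>\<inverse>\<close>, so that \<open>X\<close> has density proportional to \<open>exp (- x\<^sup>T P x / 2)\<close>.
  Breaking ties towards the least index, exactly one \<open>j\<close> minimises \<open>X\<^sub>j - \<gamma>\<^sub>j\<^sub>j / 2\<close>,
  so the minimum is the sum over \<open>j\<close> of \<open>exp (X\<^sub>j - \<gamma>\<^sub>j\<^sub>j / 2)\<close> on the event that \<open>j\<close>
  is that index. Multiplying the Gaussian density by \<open>exp (y\<^sub>j - \<gamma>\<^sub>j\<^sub>j / 2)\<close> translates it
  by the \<open>j\<close>-th column of \<open>\<Gamma>\<close> (Cameron--Martin), and after this translation the event
  reads \<open>\<Delta>\<^sup>j \<le> - var (\<Delta>\<^sup>j\<^sub>k) / 2\<close> componentwise.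
  The unimodular change of variables \<open>y \<mapsto> (\<Delta>\<^sup>j, y\<^sub>j)\<close> turns precision \<open>P\<close> into
  \<open>T\<^sup>T P T\<close>, whose marginal on the first \<open>d - 1\<close> coordinates has the Schur complement
  as precision, i.e. covariance \<open>cov (\<Delta>\<^sup>j)\<close>. All Gaussian integrals (normalising
  constant, marginals, second moments) are computed by integrating out the last coordinate
  after completing the square.
\<close>

section \<open>Quadratic forms, Schur complements and inverses\<close>

definition qform :: "nat \<Rightarrow> (nat \<Rightarrow> nat \<Rightarrow> real) \<Rightarrow> (nat \<Rightarrow> real) \<Rightarrow> real" where
  "qform n P x = (\<Sum>i<n. \<Sum>k<n. x i * P i k * x k)"

text \<open>The Schur complement of the last diagonal entry; as a precision matrix it describes
  the marginal law of the first \<open>n\<close> coordinates.\<close>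

definition schur :: "nat \<Rightarrow> (nat \<Rightarrow> nat \<Rightarrow> real) \<Rightarrow> nat \<Rightarrow> nat \<Rightarrow> real" where
  "schur n P i k = P i k - P i n * P n k / P n n"

definition lform :: "nat \<Rightarrow> (nat \<Rightarrow> real) \<Rightarrow> (nat \<Rightarrow> real) \<Rightarrow> real" where
  "lform n c x = (\<Sum>i<n. c i * x i)"

definition is_inv :: "nat \<Rightarrow> (nat \<Rightarrow> nat \<Rightarrow> real) \<Rightarrow> (nat \<Rightarrow> nat \<Rightarrow> real) \<Rightarrow> bool" where
  "is_inv n P S \<longleftrightarrow> (\<forall>i<n. \<forall>k<n. (\<Sum>l<n. P i l * S l k) = (if i = k then 1 else 0)) \<and>
                    (\<forall>i<n. \<forall>k<n. (\<Sum>l<n. S i l * P l k) = (if i = k then 1 else 0))"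

definition sym_mat :: "nat \<Rightarrow> (nat \<Rightarrow> nat \<Rightarrow> real) \<Rightarrow> bool" where
  "sym_mat n P \<longleftrightarrow> (\<forall>i<n. \<forall>k<n. P i k = P k i)"

lemma pos_def_mat_iff: "pos_def_mat n P \<longleftrightarrow> sym_mat n P \<and> (\<forall>x. (\<exists>i<n. x i \<noteq> 0) \<longrightarrow> qform n P x > 0)"
  unfolding pos_def_mat_def sym_mat_def qform_def by simp

lemma pos_def_mat_qform_pos: assumes "pos_def_mat n P" "i < n" "x i \<noteq> 0" shows "qform n P x > 0"
proof -
  have "\<forall>x. (\<exists>i<n. x i \<noteq> 0) \<longrightarrow> qform n P x > 0" using assms(1) unfolding pos_def_mat_iff by (rule conjunct2)
  thus ?thesis using assms(2,3) by blast
qed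

lemma pos_def_mat_sym: "pos_def_mat n P \<Longrightarrow> sym_mat n P"
  unfolding pos_def_mat_iff by (rule conjunct1)

lemma pos_def_mat_qform_nonneg: assumes "pos_def_mat n P" shows "qform n P x \<ge> 0"
proof (cases "\<exists>i<n. x i \<noteq> 0")
  case True thus ?thesis using pos_def_mat_qform_pos[OF assms] by (auto intro: less_imp_le)
next
  case False thus ?thesis unfolding qform_def by (auto intro!: sum_nonneg)
qed

lemma qform_cong: "(\<And>i. i < n \<Longrightarrow> x i = y i) \<Longrightarrow> qform n P x = qform n P y"
  unfolding qform_def by (auto intro!: sum.cong)

lemma lform_cong: "(\<And>i. i < n \<Longrightarrow> x i = y i) \<Longrightarrow> lform n c x = lform n c y"
  unfolding lform_def by (auto intro!: sum.cong)

lemma qform_Suc: "qform (Suc n) P x = qform n P x + x n * lform n (P n) x + (\<Sum>i<n. x i * P i n) * x n + x n * P n n * x n"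
  unfolding qform_def lform_def by (simp add: sum.distrib sum_distrib_left sum_distrib_right algebra_simps)

lemma qform_schur: "qform n (schur n P) x = qform n P x - (\<Sum>i<n. x i * P i n) * lform n (P n) x / P n n"
proof -
  have "qform n (schur n P) x = (\<Sum>i<n. \<Sum>k<n. x i * P i k * x k - (x i * P i n) * (P n k * x k) / P n n)"
    unfolding qform_def schur_def by (intro sum.cong refl) (simp add: algebra_simps)
  also have "\<dots> = qform n P x - (\<Sum>i<n. \<Sum>k<n. (x i * P i n) * (P n k * x k)) / P n n"
    unfolding qform_def by (simp add: sum_subtractf sum_divide_distrib)
  also have "(\<Sum>i<n. \<Sum>k<n. (x i * P i n) * (P n k * x k)) = (\<Sum>i<n. x i * P i n) * lform n (P n) x"
    unfolding lform_def by (simp add: sum_product)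
  finally show ?thesis .
qed

lemma qform_complete_square:
  assumes "sym_mat (Suc n) P" "P n n \<noteq> 0"
  shows "qform (Suc n) P x = qform n (schur n P) x + P n n * (x n + lform n (P n) x / P n n)^2"
proof -
  have s: "(\<Sum>i<n. x i * P i n) = lform n (P n) x"
    unfolding lform_def using assms(1) by (intro sum.cong) (auto simp: sym_mat_def)
  show ?thesis unfolding qform_Suc qform_schur s using assms(2)
    by (simp add: field_simps power2_eq_square)
qed

lemma pos_def_mat_diag_pos: assumes "pos_def_mat (Suc n) P" shows "P n n > 0"
proof -
  let ?x = "\<lambda>i. if i = n then 1 else (0::real)"
  have "qform (Suc n) P ?x > 0" by (rule pos_def_mat_qform_pos[OF assms, of n]) auto
  moreover have "qform (Suc n) P ?x = P n n" unfolding qform_Suc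
    by (simp add: qform_def lform_def)
  ultimately show ?thesis by simp
qed

lemma pos_def_mat_schur: assumes "pos_def_mat (Suc n) P" shows "pos_def_mat n (schur n P)"
proof -
  have sy: "sym_mat (Suc n) P" using pos_def_mat_sym[OF assms] .
  have p: "P n n > 0" using pos_def_mat_diag_pos[OF assms] .
  have "sym_mat n (schur n P)" using sy unfolding sym_mat_def schur_def by (auto simp: mult.commute)
  moreover have "qform n (schur n P) x > 0" if ex: "\<exists>i<n. x i \<noteq> 0" for x
  proof -
    let ?y = "x(n := - lform n (P n) x / P n n)"
    obtain i where i: "i < n" "x i \<noteq> 0" using ex by blast
    have "qform (Suc n) P ?y > 0" by (rule pos_def_mat_qform_pos[OF assms, of i]) (use i in auto)
    also have "qform (Suc n) P ?y = qform n (schur n P) ?y + P n n * (?y n + lform n (P n) ?y / P n n)^2"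
      by (rule qform_complete_square[OF sy]) (use p in auto)
    also have "qform n (schur n P) ?y = qform n (schur n P) x" by (rule qform_cong) auto
    also have "lform n (P n) ?y = lform n (P n) x" by (rule lform_cong) auto
    finally show ?thesis by simp
  qed
  ultimately show ?thesis unfolding pos_def_mat_iff by (intro conjI allI impI) auto
qed

lemma is_inv_schur:
  assumes inv: "is_inv (Suc n) P S" and p: "P n n \<noteq> 0"
  shows "is_inv n (schur n P) S"
proof -
  have A: "(\<Sum>l<n. P i l * S l k) + P i n * S n k = (if i = k then 1 else 0)" if "i < Suc n" "k < Suc n" for i k
    using inv that unfolding is_inv_def by auto
  have B: "(\<Sum>l<n. S i l * P l k) + S i n * P n k = (if i = k then 1 else 0)" if "i < Suc n" "k < Suc n" for i k
    using inv that unfolding is_inv_def by auto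
  have "(\<Sum>l<n. schur n P i l * S l k) = (if i = k then 1 else 0)" if "i < n" "k < n" for i k
  proof -
    have "(\<Sum>l<n. schur n P i l * S l k) = (\<Sum>l<n. P i l * S l k) - P i n / P n n * (\<Sum>l<n. P n l * S l k)"
      unfolding schur_def by (simp add: sum_subtractf sum_distrib_left algebra_simps)
    also have "(\<Sum>l<n. P n l * S l k) = - P n n * S n k" using A[of n k] that by auto
    also have "(\<Sum>l<n. P i l * S l k) = (if i = k then 1 else 0) - P i n * S n k" using A[of i k] that by auto
    finally show ?thesis using p by simp
  qed
  moreover have "(\<Sum>l<n. S i l * schur n P l k) = (if i = k then 1 else 0)" if "i < n" "k < n" for i k
  proof -
    have "(\<Sum>l<n. S i l * schur n P l k) = (\<Sum>l<n. S i l * P l k) - (\<Sum>l<n. S i l * P l n) * P n k / P n n"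
      unfolding schur_def by (simp add: sum_subtractf sum_distrib_left sum_distrib_right sum_divide_distrib algebra_simps)
    also have "(\<Sum>l<n. S i l * P l n) = - S i n * P n n" using B[of i n] that by auto
    also have "(\<Sum>l<n. S i l * P l k) = (if i = k then 1 else 0) - S i n * P n k" using B[of i k] that by auto
    finally show ?thesis using p by simp
  qed
  ultimately show ?thesis unfolding is_inv_def by blast
qed

lemma is_inv_sym:
  assumes inv: "is_inv n P S" and sy: "sym_mat n P"
  shows "sym_mat n S"
  unfolding sym_mat_def
proof (intro allI impI)
  fix i k assume ik: "i < n" "k < n"
  have "S i k = (\<Sum>l<n. S i l * (if l = k then 1 else 0))" using ik by (simp add: if_distrib cong: if_cong)
  also have "\<dots> = (\<Sum>l<n. S i l * (\<Sum>m<n. S k m * P m l))"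
    using inv ik unfolding is_inv_def by (intro sum.cong) auto
  also have "\<dots> = (\<Sum>m<n. S k m * (\<Sum>l<n. S i l * P l m))"
    unfolding sum_distrib_left using sy unfolding sym_mat_def
    by (subst sum.swap) (intro sum.cong refl, auto simp: algebra_simps)
  also have "\<dots> = (\<Sum>m<n. S k m * (if i = m then 1 else 0))"
    using inv ik unfolding is_inv_def by (intro sum.cong) auto
  also have "\<dots> = S k i" using ik by (simp add: if_distrib cong: if_cong)
  finally show "S i k = S k i" .
qed

lemma is_inv_unique:
  assumes "is_inv n P S" "is_inv n P S'" "i < n" "k < n"
  shows "S i k = S' i k"
proof -
  have "S i k = (\<Sum>l<n. S i l * (if l = k then 1 else 0))" using assms by (simp add: if_distrib cong: if_cong)
  also have "\<dots> = (\<Sum>l<n. S i l * (\<Sum>m<n. P l m * S' m k))"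
    using assms unfolding is_inv_def by (intro sum.cong) auto
  also have "\<dots> = (\<Sum>m<n. (\<Sum>l<n. S i l * P l m) * S' m k)"
    unfolding sum_distrib_left sum_distrib_right
    by (subst sum.swap) (intro sum.cong refl, auto simp: algebra_simps)
  also have "\<dots> = (\<Sum>m<n. (if i = m then S' m k else 0))"
    using assms unfolding is_inv_def by (intro sum.cong) auto
  also have "\<dots> = S' i k" using assms by simp
  finally show ?thesis .
qed

lemma is_inv_cong:
  assumes "is_inv n P S" "\<And>i k. i < n \<Longrightarrow> k < n \<Longrightarrow> S i k = S' i k"
  shows "is_inv n P S'"
proof -
  have "(\<Sum>l<n. P i l * S l k) = (\<Sum>l<n. P i l * S' l k)" if "k < n" for i k
    using assms(2) that by (intro sum.cong) auto
  moreover have "(\<Sum>l<n. S i l * P l k) = (\<Sum>l<n. S' i l * P l k)" if "i < n" for i k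
    using assms(2) that by (intro sum.cong) auto
  ultimately show ?thesis using assms(1) unfolding is_inv_def by simp
qed

lemma qform_diff:
  "qform n S (\<lambda>i. c i - a * r i) = qform n S c - a * (\<Sum>i<n. \<Sum>k<n. c i * S i k * r k)
      - a * (\<Sum>i<n. \<Sum>k<n. r i * S i k * c k) + a^2 * qform n S r"
proof -
  have "qform n S (\<lambda>i. c i - a * r i) = (\<Sum>i<n. \<Sum>k<n. c i * S i k * c k - a * (c i * S i k * r k)
      - a * (r i * S i k * c k) + a^2 * (r i * S i k * r k))"
    unfolding qform_def by (intro sum.cong refl) (simp add: algebra_simps power2_eq_square)
  also have "\<dots> = qform n S c - a * (\<Sum>i<n. \<Sum>k<n. c i * S i k * r k)
      - a * (\<Sum>i<n. \<Sum>k<n. r i * S i k * c k) + a^2 * qform n S r"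
    unfolding qform_def by (simp add: sum.distrib sum_subtractf sum_distrib_left)
  finally show ?thesis .
qed

lemma is_inv_last_entries:
  assumes inv: "is_inv (Suc n) P S" and sy: "sym_mat (Suc n) P" and p: "P n n \<noteq> 0"
  shows "\<And>k. k < n \<Longrightarrow> S n k = - (\<Sum>l<n. P n l * S l k) / P n n"
    and "\<And>i. i < n \<Longrightarrow> S i n = - (\<Sum>l<n. S i l * P n l) / P n n"
    and "S n n = (1 + qform n S (P n) / P n n) / P n n"
proof -
  have A: "(\<Sum>l<n. P i l * S l k) + P i n * S n k = (if i = k then 1 else 0)"
    if "i < Suc n" "k < Suc n" for i k
    using inv that unfolding is_inv_def by auto
  have B: "(\<Sum>l<n. S i l * P l k) + S i n * P n k = (if i = k then 1 else 0)"
    if "i < Suc n" "k < Suc n" for i k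
    using inv that unfolding is_inv_def by auto
  show Snk: "S n k = - (\<Sum>l<n. P n l * S l k) / P n n" if "k < n" for k
    using A[of n k] that p by (simp add: field_simps)
  show Sin: "S i n = - (\<Sum>l<n. S i l * P n l) / P n n" if "i < n" for i
  proof -
    have "(\<Sum>l<n. S i l * P l n) = (\<Sum>l<n. S i l * P n l)"
      using sy unfolding sym_mat_def by (intro sum.cong) auto
    thus ?thesis using B[of i n] that p by (simp add: field_simps)
  qed
  have "(\<Sum>l<n. P n l * S l n) = (\<Sum>l<n. P n l * (- (\<Sum>k<n. S l k * P n k) / P n n))"
    by (intro sum.cong) (auto simp: Sin)
  also have "\<dots> = - qform n S (P n) / P n n"
    unfolding qform_def by (simp add: sum_distrib_left sum_divide_distrib sum_negf mult.assoc)
  finally have "(\<Sum>l<n. P n l * S l n) = - qform n S (P n) / P n n" .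
  moreover have "S n n = (1 - (\<Sum>l<n. P n l * S l n)) / P n n"
    using A[of n n] p by (simp add: field_simps)
  ultimately show "S n n = (1 + qform n S (P n) / P n n) / P n n" by simp
qed

lemma qform_Suc_inv:
  assumes inv: "is_inv (Suc n) P S" and sy: "sym_mat (Suc n) P" and p: "P n n \<noteq> 0"
  shows "qform (Suc n) S c = qform n S (\<lambda>i. c i - c n * P n i / P n n) + (c n)^2 / P n n"
proof -
  define T where "T = (\<Sum>i<n. \<Sum>k<n. c i * S i k * P n k)"
  define U where "U = (\<Sum>i<n. \<Sum>k<n. P n i * S i k * c k)"
  note last = is_inv_last_entries[OF inv sy p]
  have "lform n (S n) c = (\<Sum>k<n. (- (\<Sum>l<n. P n l * S l k) / P n n) * c k)"
    unfolding lform_def by (intro sum.cong) (auto simp: last(1))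
  also have "\<dots> = - U / P n n"
    unfolding U_def by (subst sum.swap) (simp add: sum_distrib_right sum_divide_distrib sum_negf)
  finally have l1: "lform n (S n) c = - U / P n n" .
  have "(\<Sum>i<n. c i * S i n) = (\<Sum>i<n. c i * (- (\<Sum>l<n. S i l * P n l) / P n n))"
    by (intro sum.cong) (auto simp: last(2))
  also have "\<dots> = - T / P n n"
    unfolding T_def by (simp add: sum_distrib_left sum_divide_distrib sum_negf mult.assoc)
  finally have l2: "(\<Sum>i<n. c i * S i n) = - T / P n n" .
  have "qform (Suc n) S c =
      qform n S c + c n * lform n (S n) c + (\<Sum>i<n. c i * S i n) * c n + c n * S n n * c n"
    by (rule qform_Suc)
  also have "\<dots> = qform n S c - c n * U / P n n - T * c n / P n n
      + (c n)^2 * (1 + qform n S (P n) / P n n) / P n n"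
    unfolding l1 l2 last(3) by (simp add: power2_eq_square)
  also have "\<dots> = qform n S (\<lambda>i. c i - (c n / P n n) * P n i) + (c n)^2 / P n n"
    unfolding qform_diff T_def[symmetric] U_def[symmetric] using p
    by (simp add: field_simps power2_eq_square)
  finally show ?thesis by simp
qed

lemma lform_Suc_upd: "lform (Suc n) c (u(n:=t)) = lform n c u + c n * t"
proof -
  have "lform n c (u(n:=t)) = lform n c u" by (rule lform_cong) auto
  thus ?thesis unfolding lform_def by simp
qed

lemma sq_matrix_Suc_factor:
  assumes p: "P n n \<noteq> 0"
  shows "sq_matrix (Suc n) P =
    Matrix.mat (Suc n) (Suc n) (\<lambda>(i,k). if i = k then 1 else if k = n then P i n / P n n else 0) *
    Matrix.mat (Suc n) (Suc n) (\<lambda>(i,k). if i = n then P n k else if k = n then 0 else schur n P i k)"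
    (is "_ = ?L * ?B")
proof (rule eq_matI)
  fix i k assume "i < dim_row (?L * ?B)" and "k < dim_col (?L * ?B)"
  hence i: "i < Suc n" and k: "k < Suc n" by auto
  have "(?L * ?B) $$ (i, k) = (\<Sum>l<n. ?L $$ (i,l) * ?B $$ (l,k)) + ?L $$ (i,n) * ?B $$ (n,k)"
    using i k by (simp add: scalar_prod_def atLeast0LessThan)
  also have "(\<Sum>l<n. ?L $$ (i,l) * ?B $$ (l,k)) = (\<Sum>l<n. if l = i then ?B $$ (i,k) else 0)"
    using i by (intro sum.cong refl) auto
  also have "\<dots> + ?L $$ (i,n) * ?B $$ (n,k) = P i k"
    using i k p by (auto simp: schur_def field_simps less_Suc_eq)
  finally show "sq_matrix (Suc n) P $$ (i, k) = (?L * ?B) $$ (i, k)"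
    using i k by (simp add: sq_matrix_def)
qed (auto simp: sq_matrix_def)

lemma det_schur:
  assumes p: "P n n \<noteq> 0"
  shows "Determinant.det (sq_matrix (Suc n) P) = P n n * Determinant.det (sq_matrix n (schur n P))"
proof -
  define L where "L = Matrix.mat (Suc n) (Suc n)
    (\<lambda>(i,k). if i = k then 1 else if k = n then P i n / P n n else (0::real))"
  define B where "B = Matrix.mat (Suc n) (Suc n)
    (\<lambda>(i,k). if i = n then P n k else if k = n then 0 else schur n P i k)"
  have Lc: "L \<in> carrier_mat (Suc n) (Suc n)" and Bc: "B \<in> carrier_mat (Suc n) (Suc n)"
    by (auto simp: L_def B_def)
  have "upper_triangular L" by (auto simp: upper_triangular_def L_def)
  hence "Determinant.det L = prod_list (diag_mat L)" using det_upper_triangular Lc by blast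
  also have "\<dots> = 1" unfolding prod_list_diag_prod by (intro prod.neutral) (auto simp: L_def)
  finally have dL: "Determinant.det L = 1" .
  have "Determinant.det B = (\<Sum>i<Suc n. B $$ (i,n) * cofactor B i n)"
    by (rule laplace_expansion_column[OF Bc]) simp
  also have "\<dots> = B $$ (n,n) * Determinant.det (mat_delete B n n)"
    by (subst sum.mono_neutral_right[of "{..<Suc n}" "{n}"]) (auto simp: B_def cofactor_def)
  also have "mat_delete B n n = sq_matrix n (schur n P)"
    by (rule eq_matI) (auto simp: mat_delete_def B_def sq_matrix_def)
  finally have dB: "Determinant.det B = P n n * Determinant.det (sq_matrix n (schur n P))"
    by (simp add: B_def)
  show ?thesis
    unfolding sq_matrix_Suc_factor[of P n, OF p] L_def[symmetric] B_def[symmetric] det_mult[OF Lc Bc] dL dB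
    by simp
qed

lemma pos_def_mat_det_pos: "pos_def_mat n P \<Longrightarrow> Determinant.det (sq_matrix n P) > 0"
proof (induction n arbitrary: P)
  case 0
  thus ?case by (simp add: sq_matrix_def)
next
  case (Suc n)
  have "P n n > 0" using pos_def_mat_diag_pos[OF Suc.prems] .
  moreover have "Determinant.det (sq_matrix n (schur n P)) > 0" using Suc.IH[OF pos_def_mat_schur[OF Suc.prems]] .
  ultimately show ?case by (simp add: det_schur)
qed

lemma is_inv_swap: "is_inv n P S \<Longrightarrow> is_inv n S P"
  unfolding is_inv_def by blast

lemma is_inv_mult_vec:
  assumes inv: "is_inv n S T" and sy: "sym_mat n T" and l: "l < n"
  shows "(\<Sum>m<n. S l m * (\<Sum>i<n. x i * T i m)) = x l"
proof -
  have "(\<Sum>m<n. S l m * (\<Sum>i<n. x i * T i m)) = (\<Sum>i<n. x i * (\<Sum>m<n. S l m * T m i))"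
    unfolding sum_distrib_left using sy unfolding sym_mat_def
    by (subst sum.swap) (intro sum.cong refl, auto simp: algebra_simps)
  also have "\<dots> = (\<Sum>i<n. if i = l then x l else 0)"
    using inv l unfolding is_inv_def by (intro sum.cong) auto
  also have "\<dots> = x l" using l by simp
  finally show ?thesis .
qed

lemma pos_def_mat_is_inv:
  assumes pd: "pos_def_mat n S" and inv: "is_inv n S T"
  shows "pos_def_mat n T"
proof -
  have syS: "sym_mat n S" using pos_def_mat_sym[OF pd] .
  have syT: "sym_mat n T" using is_inv_sym[OF inv syS] .
  have "qform n T x > 0" if ex: "\<exists>i<n. x i \<noteq> 0" for x
  proof -
    define y where "y l = (\<Sum>i<n. x i * T i l)" for l
    have Sy: "(\<Sum>m<n. S l m * y m) = x l" if "l < n" for l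
      unfolding y_def by (rule is_inv_mult_vec[OF inv syT that])
    obtain i where i: "i < n" "x i \<noteq> 0" using ex by blast
    have "\<exists>l<n. y l \<noteq> 0"
    proof (rule ccontr)
      assume "\<not> (\<exists>l<n. y l \<noteq> 0)"
      hence "(\<Sum>m<n. S i m * y m) = 0" by (intro sum.neutral) auto
      thus False using Sy[OF i(1)] i(2) by simp
    qed
    then obtain l where l: "l < n" "y l \<noteq> 0" by blast
    have "qform n S y > 0" by (rule pos_def_mat_qform_pos[where x=y, OF pd l])
    also have "qform n S y = (\<Sum>l<n. y l * (\<Sum>m<n. S l m * y m))"
      unfolding qform_def by (simp add: sum_distrib_left mult.assoc)
    also have "\<dots> = (\<Sum>l<n. y l * x l)" by (intro sum.cong refl) (simp add: Sy)
    also have "\<dots> = qform n T x" unfolding qform_def y_def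
      by (subst sum.swap) (simp add: sum_distrib_right)
    finally show ?thesis .
  qed
  thus ?thesis using syT unfolding pos_def_mat_iff by blast
qed

definition mat_inv :: "nat \<Rightarrow> (nat \<Rightarrow> nat \<Rightarrow> real) \<Rightarrow> nat \<Rightarrow> nat \<Rightarrow> real" where
  "mat_inv n S i k = the (mat_inverse (sq_matrix n S)) $$ (i, k)"

lemma sq_matrix_carrier[simp]: "sq_matrix n S \<in> carrier_mat n n"
  by (simp add: sq_matrix_def)

lemma sq_matrix_mat_inv:
  assumes pd: "pos_def_mat n S"
  shows "sq_matrix n S * sq_matrix n (mat_inv n S) = 1\<^sub>m n"
    and "sq_matrix n (mat_inv n S) * sq_matrix n S = 1\<^sub>m n"
proof -
  let ?A = "sq_matrix n S"
  have "Determinant.det ?A \<noteq> 0" using pos_def_mat_det_pos[OF pd] by simp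
  hence unit: "?A \<in> Units (ring_mat TYPE(real) n ())"
    by (rule det_non_zero_imp_unit[OF sq_matrix_carrier])
  obtain B where B: "mat_inverse ?A = Some B"
  proof (cases "mat_inverse ?A")
    case None
    hence "?A \<notin> Units (ring_mat TYPE(real) n ())" by (rule mat_inverse(1)[OF sq_matrix_carrier])
    with unit show ?thesis by simp
  qed auto
  have AB: "?A * B = 1\<^sub>m n" "B * ?A = 1\<^sub>m n" "B \<in> carrier_mat n n"
    using mat_inverse(2)[OF sq_matrix_carrier B] by auto
  have "mat_inv n S i k = B $$ (i,k)" for i k unfolding mat_inv_def B by simp
  hence "sq_matrix n (mat_inv n S) = B"
    by (intro eq_matI) (use AB(3) in \<open>auto simp: sq_matrix_def\<close>)
  thus "?A * sq_matrix n (mat_inv n S) = 1\<^sub>m n" "sq_matrix n (mat_inv n S) * ?A = 1\<^sub>m n"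
    using AB by simp_all
qed

lemma is_inv_mat_inv:
  assumes pd: "pos_def_mat n S"
  shows "is_inv n S (mat_inv n S)"
proof -
  have entry: "(sq_matrix n A * sq_matrix n B) $$ (i, k) = (\<Sum>l<n. A i l * B l k)"
    if "i < n" "k < n" for A B i k
    using that by (simp add: scalar_prod_def atLeast0LessThan sq_matrix_def)
  show ?thesis
    using entry[of _ _ S "mat_inv n S"] entry[of _ _ "mat_inv n S" S] sq_matrix_mat_inv[OF pd]
    unfolding is_inv_def by simp
qed

lemma pos_def_mat_mat_inv: "pos_def_mat n S \<Longrightarrow> pos_def_mat n (mat_inv n S)"
  by (rule pos_def_mat_is_inv[OF _ is_inv_mat_inv])

lemma det_mat_inv:
  assumes pd: "pos_def_mat n S"
  shows "Determinant.det (sq_matrix n (mat_inv n S)) * Determinant.det (sq_matrix n S) = 1"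
  using det_mult[OF sq_matrix_carrier sq_matrix_carrier, of n "mat_inv n S" S] sq_matrix_mat_inv(2)[OF pd]
  by simp

lemma qform_polarization:
  fixes a b :: "nat \<Rightarrow> real"
  shows "qform n S (\<lambda>k. a k + b k) - qform n S (\<lambda>k. a k - b k) =
    2 * (\<Sum>k<n. \<Sum>m<n. a k * S k m * b m) + 2 * (\<Sum>k<n. \<Sum>m<n. b k * S k m * a m)"
proof -
  have "qform n S (\<lambda>k. a k + b k) - qform n S (\<lambda>k. a k - b k) =
     (\<Sum>k<n. \<Sum>m<n. (a k + b k) * S k m * (a m + b m) - (a k - b k) * S k m * (a m - b m))"
    unfolding qform_def by (simp add: sum_subtractf)
  also have "\<dots> = (\<Sum>k<n. \<Sum>m<n. 2 * (a k * S k m * b m) + 2 * (b k * S k m * a m))"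
    by (intro sum.cong refl) (simp add: algebra_simps)
  also have "\<dots> = 2 * (\<Sum>k<n. \<Sum>m<n. a k * S k m * b m) + 2 * (\<Sum>k<n. \<Sum>m<n. b k * S k m * a m)"
    by (simp add: sum.distrib sum_distrib_left)
  finally show ?thesis .
qed

lemma sum_delta_mult_left:
  fixes i n :: nat
  assumes "i < n"
  shows "(\<Sum>k<n. (if k = i then 1 else 0) * g k) = (g i :: real)"
proof -
  have "(\<Sum>k<n. (if k = i then 1 else 0) * g k) = (\<Sum>k\<in>{i}. (if k = i then 1 else 0) * g k)"
    by (rule sum.mono_neutral_right) (use assms in auto)
  thus ?thesis by simp
qed

lemma sum_delta_mult_right: "i < (n::nat) \<Longrightarrow> (\<Sum>k<n. g k * (if k = i then 1 else 0)) = (g i :: real)"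
  using sum_delta_mult_left[of i n g] by (simp add: mult.commute)

lemma bilinear_unit:
  fixes i l n :: nat and S :: "nat \<Rightarrow> nat \<Rightarrow> real"
  assumes "i < n" "l < n"
  shows "(\<Sum>k<n. \<Sum>m<n. (if k = i then 1 else 0) * S k m * (if m = l then 1 else (0::real))) = S i l"
proof -
  have "(\<Sum>k<n. \<Sum>m<n. (if k = i then 1 else 0) * S k m * (if m = l then 1 else (0::real))) =
      (\<Sum>k<n. (if k = i then 1 else 0) * S k l)"
    by (rule sum.cong[OF refl]) (rule sum_delta_mult_right[OF assms(2)])
  also have "\<dots> = S i l" by (rule sum_delta_mult_left[OF assms(1)])
  finally show ?thesis .
qed

lemma qform_polarization_unit:
  assumes "sym_mat n S" "i < n" "l < n"
  shows "qform n S (\<lambda>k. (if k = i then 1 else 0) + (if k = l then 1 else 0)) -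
         qform n S (\<lambda>k. (if k = i then 1 else 0) - (if k = l then 1 else 0)) = 4 * S i l"
  unfolding qform_polarization bilinear_unit[OF assms(2,3)] bilinear_unit[OF assms(3,2)]
  using assms unfolding sym_mat_def by simp

lemma lform_diff_unit:
  assumes "j < m" "k < m"
  shows "lform m (\<lambda>a. (if a = j then 1 else 0) - (if a = k then 1 else 0)) y = y j - y k"
proof -
  have "lform m (\<lambda>a. (if a = j then 1 else 0) - (if a = k then 1 else 0)) y =
      (\<Sum>a<m. (if a = j then 1 else 0) * y a) - (\<Sum>a<m. (if a = k then 1 else 0) * y a)"
    unfolding lform_def by (simp add: left_diff_distrib sum_subtractf)
  thus ?thesis by (simp add: sum_delta_mult_left[OF assms(1)] sum_delta_mult_left[OF assms(2)])
qed

lemma qform_diff_unit: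
  fixes S :: "nat \<Rightarrow> nat \<Rightarrow> real"
  assumes "j < m" "k < m"
  shows "qform m S (\<lambda>a. (if a = j then 1 else 0) - (if a = k then 1 else 0)) = S j j + S k k - S j k - S k j"
proof -
  have "qform m S (\<lambda>a. (if a = j then 1 else 0) - 1 * (if a = k then 1 else 0)) =
     qform m S (\<lambda>a. if a = j then 1 else 0) - 1 * S j k - 1 * S k j + 1^2 * qform m S (\<lambda>a. if a = k then 1 else 0)"
    unfolding qform_diff bilinear_unit[OF assms] bilinear_unit[OF assms(2,1)] ..
  also have "qform m S (\<lambda>a. if a = j then 1 else 0) = S j j" unfolding qform_def by (rule bilinear_unit[OF assms(1,1)])
  also have "qform m S (\<lambda>a. if a = k then 1 else 0) = S k k" unfolding qform_def by (rule bilinear_unit[OF assms(2,2)])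
  finally show ?thesis by simp
qed

lemma sum_unit_comb:
  fixes i l n :: nat and s :: real
  assumes "i < n" "l < n"
  shows "(\<Sum>a<n. ((if a = i then 1 else 0) + s * (if a = l then 1 else 0)) * D a) = D i + s * D l"
proof -
  have "(\<Sum>a<n. ((if a = i then 1 else 0) + s * (if a = l then 1 else 0)) * D a) =
      (\<Sum>a<n. (if a = i then 1 else 0) * D a) + s * (\<Sum>a<n. (if a = l then 1 else 0) * D a)"
    by (simp add: distrib_right sum.distrib sum_distrib_left mult.assoc)
  thus ?thesis by (simp only: sum_delta_mult_left assms)
qed

definition congr_mat :: "nat \<Rightarrow> (nat \<Rightarrow> nat \<Rightarrow> real) \<Rightarrow> (nat \<Rightarrow> nat \<Rightarrow> real) \<Rightarrow> nat \<Rightarrow> nat \<Rightarrow> real" where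
  "congr_mat m T P b c = (\<Sum>a<m. \<Sum>e<m. T a b * P a e * T e c)"

lemma sum_swap4:
  "(\<Sum>a\<in>A. \<Sum>e\<in>A. \<Sum>b\<in>B. \<Sum>c\<in>B. f a e b c) = (\<Sum>b\<in>B. \<Sum>c\<in>B. \<Sum>a\<in>A. \<Sum>e\<in>A. f a e b c)"
proof -
  have "(\<Sum>a\<in>A. \<Sum>e\<in>A. \<Sum>b\<in>B. \<Sum>c\<in>B. f a e b c) = (\<Sum>a\<in>A. \<Sum>b\<in>B. \<Sum>e\<in>A. \<Sum>c\<in>B. f a e b c)"
    by (rule sum.cong[OF refl], rule sum.swap)
  also have "\<dots> = (\<Sum>b\<in>B. \<Sum>a\<in>A. \<Sum>e\<in>A. \<Sum>c\<in>B. f a e b c)" by (rule sum.swap)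
  also have "\<dots> = (\<Sum>b\<in>B. \<Sum>a\<in>A. \<Sum>c\<in>B. \<Sum>e\<in>A. f a e b c)"
    by (rule sum.cong[OF refl], rule sum.cong[OF refl], rule sum.swap)
  also have "\<dots> = (\<Sum>b\<in>B. \<Sum>c\<in>B. \<Sum>a\<in>A. \<Sum>e\<in>A. f a e b c)"
    by (rule sum.cong[OF refl], rule sum.swap)
  finally show ?thesis .
qed

lemma sum_mult_sum: fixes f :: "'x \<Rightarrow> real" and g :: "'y \<Rightarrow> real" shows "sum f A * p * sum g B = (\<Sum>b\<in>A. \<Sum>c\<in>B. f b * p * g c)"
proof -
  have "sum f A * p * sum g B = p * (sum f A * sum g B)" by (simp add: mult_ac)
  also have "\<dots> = p * (\<Sum>b\<in>A. \<Sum>c\<in>B. f b * g c)" by (simp add: sum_product)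
  also have "\<dots> = (\<Sum>b\<in>A. \<Sum>c\<in>B. f b * p * g c)" by (simp add: sum_distrib_left mult_ac)
  finally show ?thesis .
qed

lemma qform_linear_subst: "qform m P (\<lambda>a. \<Sum>b<m. T a b * z b) = qform m (congr_mat m T P) z"
proof -
  have "qform m P (\<lambda>a. \<Sum>b<m. T a b * z b) = (\<Sum>a<m. \<Sum>e<m. \<Sum>b<m. \<Sum>c<m. (T a b * z b) * P a e * (T e c * z c))"
    unfolding qform_def by (intro sum.cong refl) (rule sum_mult_sum)
  also have "\<dots> = (\<Sum>b<m. \<Sum>c<m. \<Sum>a<m. \<Sum>e<m. (T a b * z b) * P a e * (T e c * z c))"
    by (rule sum_swap4)
  also have "\<dots> = qform m (congr_mat m T P) z"
    unfolding qform_def congr_mat_def by (intro sum.cong refl) (simp add: sum_distrib_left sum_distrib_right mult_ac)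
  finally show ?thesis .
qed

lemma sym_mat_congr_mat: assumes "sym_mat m P" shows "sym_mat m (congr_mat m T P)"
  unfolding sym_mat_def congr_mat_def
proof (intro allI impI)
  fix b c assume "b < m" "c < m"
  have "(\<Sum>a<m. \<Sum>e<m. T a b * P a e * T e c) = (\<Sum>e<m. \<Sum>a<m. T a b * P a e * T e c)" by (rule sum.swap)
  also have "\<dots> = (\<Sum>a<m. \<Sum>e<m. T a c * P a e * T e b)"
    using assms unfolding sym_mat_def by (intro sum.cong refl) (auto simp: mult_ac)
  finally show "(\<Sum>a<m. \<Sum>e<m. T a b * P a e * T e c) = (\<Sum>a<m. \<Sum>e<m. T a c * P a e * T e b)" .
qed

section \<open>Gaussian measures with a given precision matrix\<close>

abbreviation lborel_vec :: "nat \<Rightarrow> (nat \<Rightarrow> real) measure" where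
  "lborel_vec n \<equiv> PiM {..<n} (\<lambda>_. lborel)"

interpretation lborel_product: product_sigma_finite "\<lambda>_::nat. lborel :: real measure"
  by (simp add: product_sigma_finite_def sigma_finite_lborel)

lemma measurable_component: "i < n \<Longrightarrow> (\<lambda>x. x i) \<in> borel_measurable (lborel_vec n)"
  using measurable_component_singleton[of i "{..<n}" "\<lambda>_. lborel :: real measure"] by simp

lemma measurable_fun_upd_Suc[measurable]:
  "(\<lambda>(u, t). u(n := t)) \<in> measurable (lborel_vec n \<Otimes>\<^sub>M lborel) (lborel_vec (Suc n))"
  using measurable_add_dim[of n "{..<n}" "\<lambda>_. lborel :: real measure"] by (simp add: lessThan_Suc)

lemma measurable_fun_upd_const: "(\<lambda>v. v(n:=t)) \<in> measurable (lborel_vec n) (lborel_vec (Suc n))"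
proof -
  have "(\<lambda>v. (v, t)) \<in> measurable (lborel_vec n) (lborel_vec n \<Otimes>\<^sub>M lborel)" by measurable
  from measurable_comp[OF this measurable_fun_upd_Suc[of n]] show ?thesis by (simp add: comp_def)
qed

lemma nn_integral_lborel_vec_Suc:
  assumes g: "g \<in> borel_measurable (lborel_vec (Suc n))"
  shows "(\<integral>\<^sup>+x. g x \<partial>lborel_vec (Suc n)) = (\<integral>\<^sup>+u. (\<integral>\<^sup>+t. g (u(n:=t)) \<partial>lborel) \<partial>lborel_vec n)"
  unfolding lessThan_Suc by (rule lborel_product.product_nn_integral_insert) (use g in \<open>auto simp flip: lessThan_Suc\<close>)

lemma nn_integral_lborel_vec_Suc_rev:
  assumes g: "g \<in> borel_measurable (lborel_vec (Suc n))"
  shows "(\<integral>\<^sup>+x. g x \<partial>lborel_vec (Suc n)) = (\<integral>\<^sup>+t. (\<integral>\<^sup>+u. g (u(n:=t)) \<partial>lborel_vec n) \<partial>lborel)"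
  unfolding lessThan_Suc by (rule lborel_product.product_nn_integral_insert_rev) (use g in \<open>auto simp flip: lessThan_Suc\<close>)

lemma measurable_nn_integral_last:
  assumes g: "g \<in> borel_measurable (lborel_vec (Suc n))"
  shows "(\<lambda>u. \<integral>\<^sup>+t. g (u(n:=t)) \<partial>lborel) \<in> borel_measurable (lborel_vec n)"
proof -
  have "(\<lambda>(u, t). g (u(n:=t))) \<in> borel_measurable (lborel_vec n \<Otimes>\<^sub>M lborel)"
    using measurable_comp[OF measurable_fun_upd_Suc g] by (simp add: comp_def case_prod_beta')
  thus ?thesis by (rule lborel.borel_measurable_nn_integral)
qed

lemma qform_measurable[measurable]: "(\<lambda>x. qform n P x) \<in> borel_measurable (lborel_vec n)"
  unfolding qform_def by (intro borel_measurable_sum borel_measurable_times borel_measurable_const measurable_component) auto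

lemma lform_measurable[measurable]: "(\<lambda>x. lform n c x) \<in> borel_measurable (lborel_vec n)"
  unfolding lform_def by (intro borel_measurable_sum borel_measurable_times borel_measurable_const measurable_component) auto

definition gauss_kernel :: "nat \<Rightarrow> (nat \<Rightarrow> nat \<Rightarrow> real) \<Rightarrow> (nat \<Rightarrow> real) \<Rightarrow> real" where
  "gauss_kernel n P x = exp (- qform n P x / 2)"

definition gauss_const :: "nat \<Rightarrow> (nat \<Rightarrow> nat \<Rightarrow> real) \<Rightarrow> real" where
  "gauss_const n P = (2 * pi) powr (real n / 2) / sqrt (Determinant.det (sq_matrix n P))"

text \<open>The conditional mean of the last coordinate given the first \<open>n\<close> ones.\<close>

definition cond_mean :: "nat \<Rightarrow> (nat \<Rightarrow> nat \<Rightarrow> real) \<Rightarrow> (nat \<Rightarrow> real) \<Rightarrow> real" where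
  "cond_mean n P u = - lform n (P n) u / P n n"

text \<open>Unlike \<open>gauss_measure\<close>, parametrised by the precision matrix \<open>P\<close> (the inverse covariance).\<close>

definition gauss_prec :: "nat \<Rightarrow> (nat \<Rightarrow> nat \<Rightarrow> real) \<Rightarrow> (nat \<Rightarrow> real) measure" where
  "gauss_prec n P = density (lborel_vec n) (\<lambda>x. ennreal (gauss_kernel n P x / gauss_const n P))"

lemma gauss_kernel_measurable[measurable]: "(\<lambda>x. gauss_kernel n P x) \<in> borel_measurable (lborel_vec n)"
  unfolding gauss_kernel_def by measurable

lemma cond_mean_measurable[measurable]: "(\<lambda>x. cond_mean n P x) \<in> borel_measurable (lborel_vec n)"
  unfolding cond_mean_def by measurable

lemma gauss_kernel_pos: "gauss_kernel n P x > 0" by (simp add: gauss_kernel_def)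

lemma gauss_const_pos: "pos_def_mat n P \<Longrightarrow> gauss_const n P > 0"
  unfolding gauss_const_def using pos_def_mat_det_pos[of n P] by simp

lemma exp_quadratic_normal_density:
  assumes p: "p > 0"
  shows "exp (- (p * (t - m)^2 / 2)) = sqrt (2*pi/p) * normal_density m (1/sqrt p) t"
proof -
  have "(1 / sqrt p)^2 = 1 / p" using p by (simp add: power_divide)
  hence "normal_density m (1/sqrt p) t = 1 / sqrt (2 * pi / p) * exp (- (p * (t - m)^2 / 2))"
    unfolding normal_density_def using p by (simp add: field_simps)
  thus ?thesis using p by simp
qed

lemma nn_integral_normal_density: "\<sigma> > 0 \<Longrightarrow> (\<integral>\<^sup>+t. ennreal (normal_density m \<sigma> t) \<partial>lborel) = 1"
  by (subst nn_integral_eq_integral) (auto simp: integral_normal_density)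

lemma nn_integral_exp_quadratic:
  assumes p: "p > 0"
  shows "(\<integral>\<^sup>+t. ennreal (exp (- (p * (t - m)^2 / 2))) \<partial>lborel) = ennreal (sqrt (2*pi/p))"
proof -
  have "(\<integral>\<^sup>+t. ennreal (exp (- (p * (t - m)^2 / 2))) \<partial>lborel)
      = (\<integral>\<^sup>+t. ennreal (sqrt (2*pi/p)) * ennreal (normal_density m (1/sqrt p) t) \<partial>lborel)"
    by (intro nn_integral_cong) (subst exp_quadratic_normal_density[OF p], rule ennreal_mult, use p in auto)
  also have "\<dots> = ennreal (sqrt (2*pi/p)) * (\<integral>\<^sup>+t. ennreal (normal_density m (1/sqrt p) t) \<partial>lborel)"
    by (rule nn_integral_cmult) measurable
  also have "\<dots> = ennreal (sqrt (2*pi/p))" using p by (simp add: nn_integral_normal_density)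
  finally show ?thesis .
qed

lemma gauss_kernel_Suc:
  assumes pd: "pos_def_mat (Suc n) P"
  shows "gauss_kernel (Suc n) P (u(n:=t)) = gauss_kernel n (schur n P) u * exp (- (P n n * (t - cond_mean n P u)^2 / 2))"
proof -
  have p: "P n n > 0" using pos_def_mat_diag_pos[OF pd] .
  have "qform (Suc n) P (u(n:=t)) = qform n (schur n P) (u(n:=t)) + P n n * ((u(n:=t)) n + lform n (P n) (u(n:=t)) / P n n)^2"
    by (rule qform_complete_square[OF pos_def_mat_sym[OF pd]]) (use p in auto)
  also have "qform n (schur n P) (u(n:=t)) = qform n (schur n P) u" by (rule qform_cong) auto
  also have "lform n (P n) (u(n:=t)) = lform n (P n) u" by (rule lform_cong) auto
  also have "(u(n:=t)) n + lform n (P n) u / P n n = t - cond_mean n P u" by (simp add: cond_mean_def)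
  finally have "qform (Suc n) P (u(n:=t)) = qform n (schur n P) u + P n n * (t - cond_mean n P u)^2" .
  thus ?thesis unfolding gauss_kernel_def by (simp add: exp_add[symmetric] field_simps)
qed

lemma gauss_const_Suc:
  assumes pd: "pos_def_mat (Suc n) P"
  shows "gauss_const (Suc n) P = gauss_const n (schur n P) * sqrt (2*pi / P n n)"
proof -
  have p: "P n n > 0" using pos_def_mat_diag_pos[OF pd] .
  have d: "Determinant.det (sq_matrix n (schur n P)) > 0" using pos_def_mat_det_pos[OF pos_def_mat_schur[OF pd]] .
  have "(2*pi) powr (real (Suc n) / 2) = (2*pi) powr (real n / 2) * sqrt (2*pi)"
    by (simp add: add_divide_distrib powr_add powr_half_sqrt)
  moreover have dd: "Determinant.det (sq_matrix (Suc n) P) = P n n * Determinant.det (sq_matrix n (schur n P))"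
    by (rule det_schur) (use p in simp)
  ultimately show ?thesis unfolding gauss_const_def dd
    using p d by (simp add: real_sqrt_mult real_sqrt_divide field_simps)
qed

lemma nn_integral_gauss_kernel:
  assumes "pos_def_mat n P"
  shows "(\<integral>\<^sup>+x. ennreal (gauss_kernel n P x) \<partial>lborel_vec n) = ennreal (gauss_const n P)"
  using assms
proof (induction n arbitrary: P)
  case 0
  have "(\<integral>\<^sup>+x. ennreal (gauss_kernel 0 P x) \<partial>lborel_vec 0) = ennreal (gauss_kernel 0 P (\<lambda>_. undefined))"
    by (simp add: lborel_product.nn_integral_empty)
  thus ?case by (simp add: gauss_kernel_def qform_def gauss_const_def sq_matrix_def)
next
  case (Suc n)
  have p: "P n n > 0" using pos_def_mat_diag_pos[OF Suc.prems] .
  have "(\<integral>\<^sup>+x. ennreal (gauss_kernel (Suc n) P x) \<partial>lborel_vec (Suc n))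
      = (\<integral>\<^sup>+u. (\<integral>\<^sup>+t. ennreal (gauss_kernel (Suc n) P (u(n:=t))) \<partial>lborel) \<partial>lborel_vec n)"
    by (rule nn_integral_lborel_vec_Suc) measurable
  also have "\<dots> = (\<integral>\<^sup>+u. ennreal (gauss_kernel n (schur n P) u) * ennreal (sqrt (2*pi / P n n)) \<partial>lborel_vec n)"
  proof (rule nn_integral_cong)
    fix u
    have "(\<integral>\<^sup>+t. ennreal (gauss_kernel (Suc n) P (u(n:=t))) \<partial>lborel)
        = (\<integral>\<^sup>+t. ennreal (gauss_kernel n (schur n P) u) * ennreal (exp (- (P n n * (t - cond_mean n P u)^2 / 2))) \<partial>lborel)"
      by (intro nn_integral_cong) (simp add: gauss_kernel_Suc[OF Suc.prems] ennreal_mult gauss_kernel_pos less_imp_le)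
    also have "\<dots> = ennreal (gauss_kernel n (schur n P) u) * ennreal (sqrt (2*pi / P n n))"
      by (subst nn_integral_cmult) (auto simp: nn_integral_exp_quadratic p)
    finally show "(\<integral>\<^sup>+t. ennreal (gauss_kernel (Suc n) P (u(n:=t))) \<partial>lborel) = ennreal (gauss_kernel n (schur n P) u) * ennreal (sqrt (2*pi / P n n))" .
  qed
  also have "\<dots> = ennreal (gauss_const n (schur n P)) * ennreal (sqrt (2*pi / P n n))"
    by (subst nn_integral_multc) (auto simp: Suc.IH[OF pos_def_mat_schur[OF Suc.prems]])
  also have "\<dots> = ennreal (gauss_const (Suc n) P)"
    using gauss_const_Suc[OF Suc.prems] gauss_const_pos[OF pos_def_mat_schur[OF Suc.prems]] p
    by (subst ennreal_mult[symmetric]) auto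
  finally show ?case .
qed

lemma gauss_prec_density_measurable[measurable]: "(\<lambda>x. ennreal (gauss_kernel n P x / gauss_const n P)) \<in> borel_measurable (lborel_vec n)"
  by measurable

lemma space_gauss_prec[simp]: "space (gauss_prec n P) = space (lborel_vec n)"
  by (simp add: gauss_prec_def)

lemma sets_gauss_prec[simp, measurable_cong]: "sets (gauss_prec n P) = sets (lborel_vec n)"
  by (simp add: gauss_prec_def)

lemma nn_integral_gauss_prec: "f \<in> borel_measurable (lborel_vec n) \<Longrightarrow>
    (\<integral>\<^sup>+x. f x \<partial>gauss_prec n P) = (\<integral>\<^sup>+x. ennreal (gauss_kernel n P x / gauss_const n P) * f x \<partial>lborel_vec n)"
  unfolding gauss_prec_def by (rule nn_integral_density[OF gauss_prec_density_measurable])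

lemma prob_space_gauss_prec:
  assumes pd: "pos_def_mat n P"
  shows "prob_space (gauss_prec n P)"
proof
  have z: "gauss_const n P > 0" using gauss_const_pos[OF pd] .
  have "emeasure (gauss_prec n P) (space (gauss_prec n P)) = (\<integral>\<^sup>+x. ennreal (gauss_kernel n P x / gauss_const n P) * indicator (space (lborel_vec n)) x \<partial>lborel_vec n)"
    unfolding gauss_prec_def by (subst emeasure_density) auto
  also have "\<dots> = (\<integral>\<^sup>+x. ennreal (gauss_kernel n P x) * ennreal (1 / gauss_const n P) \<partial>lborel_vec n)"
    using z gauss_kernel_pos[of n P] by (intro nn_integral_cong) (simp add: ennreal_mult[symmetric] less_imp_le)
  also have "\<dots> = ennreal (gauss_const n P) * ennreal (1 / gauss_const n P)"
    by (subst nn_integral_multc) (auto simp: nn_integral_gauss_kernel[OF pd])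
  also have "\<dots> = 1" using z by (simp add: ennreal_mult[symmetric])
  finally show "emeasure (gauss_prec n P) (space (gauss_prec n P)) = 1" .
qed

lemma gauss_prec_cong:
  assumes "\<And>i k. i < n \<Longrightarrow> k < n \<Longrightarrow> P i k = P' i k"
  shows "gauss_prec n P = gauss_prec n P'"
proof -
  have "qform n P x = qform n P' x" for x unfolding qform_def using assms by (intro sum.cong refl) auto
  hence h: "gauss_kernel n P = gauss_kernel n P'" by (auto simp: gauss_kernel_def)
  have "sq_matrix n P = sq_matrix n P'" by (rule eq_matI) (auto simp: sq_matrix_def assms)
  hence "gauss_const n P = gauss_const n P'" by (simp add: gauss_const_def)
  thus ?thesis unfolding gauss_prec_def h by simp
qed

lemma gauss_density_eq:
  assumes pd: "pos_def_mat n S"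
  shows "gauss_density n S x = gauss_kernel n (mat_inv n S) x / gauss_const n (mat_inv n S)"
proof -
  define D where "D = Determinant.det (sq_matrix n S)"
  have D: "D > 0" unfolding D_def by (rule pos_def_mat_det_pos[OF pd])
  have dm: "Determinant.det (sq_matrix n (mat_inv n S)) = 1 / D"
    using det_mat_inv[OF pd] D unfolding D_def by (simp add: field_simps)
  have q: "(\<Sum>i<n. \<Sum>k<n. x i * the (mat_inverse (sq_matrix n S)) $$ (i, k) * x k) = qform n (mat_inv n S) x"
    by (simp add: qform_def mat_inv_def)
  have z: "gauss_const n (mat_inv n S) = (2*pi) powr (real n / 2) * sqrt D"
    unfolding gauss_const_def dm using D by (simp add: real_sqrt_divide)
  have c1: "(2 * pi) powr (- real n / 2) = inverse ((2*pi) powr (real n / 2))"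
  proof -
    have "- real n / 2 = - (real n / 2)" by simp
    thus ?thesis by (simp only: powr_minus)
  qed
  have c2: "D powr (- 1 / 2) = inverse (sqrt D)"
  proof -
    have "(- 1 / 2 :: real) = - (1 / 2)" by simp
    hence "D powr (- 1 / 2) = inverse (D powr (1/2))" by (simp only: powr_minus)
    thus ?thesis using D by (simp add: powr_half_sqrt)
  qed
  have e: "exp (- (1 / 2) * qform n (mat_inv n S) x) = exp (- qform n (mat_inv n S) x / 2)" by simp
  have ar: "inverse a * inverse b * E = E / (a * b)" for a b E :: real
    by (simp add: divide_inverse mult_ac)
  show ?thesis
    unfolding gauss_density_def Let_def q D_def[symmetric] c1 c2 z gauss_kernel_def e ar ..
qed

lemma gauss_measure_eq:
  assumes pd: "pos_def_mat n S"
  shows "gauss_measure n S = gauss_prec n (mat_inv n S)"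
  unfolding gauss_measure_def gauss_prec_def gauss_density_eq[OF pd] ..

lemma normal_density_measurable[measurable]: "(\<lambda>(m, t). normal_density m s t) \<in> borel_measurable (borel \<Otimes>\<^sub>M borel)"
  unfolding normal_density_def by measurable

lemma gauss_prec_density_Suc:
  assumes pd: "pos_def_mat (Suc n) P"
  shows "gauss_kernel (Suc n) P (u(n:=t)) / gauss_const (Suc n) P =
    gauss_kernel n (schur n P) u / gauss_const n (schur n P) *
    normal_density (cond_mean n P u) (1 / sqrt (P n n)) t"
proof -
  have p: "P n n > 0" using pos_def_mat_diag_pos[OF pd] .
  have z: "gauss_const n (schur n P) > 0" using gauss_const_pos[OF pos_def_mat_schur[OF pd]] .
  show ?thesis
    unfolding gauss_kernel_Suc[OF pd] gauss_const_Suc[OF pd] exp_quadratic_normal_density[OF p]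
    using p z by (simp add: field_simps)
qed

lemma nn_integral_gauss_prec_Suc:
  assumes pd: "pos_def_mat (Suc n) P" and f[measurable]: "f \<in> borel_measurable (lborel_vec (Suc n))"
  shows "(\<integral>\<^sup>+x. f x \<partial>gauss_prec (Suc n) P) =
    (\<integral>\<^sup>+u. (\<integral>\<^sup>+t. f (u(n:=t)) * ennreal (normal_density (cond_mean n P u) (1 / sqrt (P n n)) t) \<partial>lborel)
      \<partial>gauss_prec n (schur n P))"
proof -
  define \<sigma> where "\<sigma> = 1 / sqrt (P n n)"
  define g where "g u t = f (u(n:=t)) * ennreal (normal_density (cond_mean n P u) \<sigma> t)" for u t
  have g[measurable]: "(\<lambda>(u, t). g u t) \<in> borel_measurable (lborel_vec n \<Otimes>\<^sub>M lborel)"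
    unfolding g_def by measurable
  have z: "gauss_const n (schur n P) > 0" using gauss_const_pos[OF pos_def_mat_schur[OF pd]] .
  have "(\<integral>\<^sup>+x. f x \<partial>gauss_prec (Suc n) P) =
      (\<integral>\<^sup>+x. ennreal (gauss_kernel (Suc n) P x / gauss_const (Suc n) P) * f x \<partial>lborel_vec (Suc n))"
    by (rule nn_integral_gauss_prec) measurable
  also have "\<dots> = (\<integral>\<^sup>+u. (\<integral>\<^sup>+t. ennreal (gauss_kernel n (schur n P) u / gauss_const n (schur n P)) * g u t
      \<partial>lborel) \<partial>lborel_vec n)"
  proof (subst nn_integral_lborel_vec_Suc, measurable, intro nn_integral_cong)
    fix u t
    have "ennreal (gauss_kernel n (schur n P) u / gauss_const n (schur n P) *
        normal_density (cond_mean n P u) \<sigma> t) = ennreal (gauss_kernel n (schur n P) u /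
        gauss_const n (schur n P)) * ennreal (normal_density (cond_mean n P u) \<sigma> t)"
      by (rule ennreal_mult) (use z gauss_kernel_pos[of n "schur n P" u] in \<open>auto simp: normal_density_nonneg\<close>)
    thus "ennreal (gauss_kernel (Suc n) P (u(n:=t)) / gauss_const (Suc n) P) * f (u(n:=t)) =
        ennreal (gauss_kernel n (schur n P) u / gauss_const n (schur n P)) * g u t"
      unfolding g_def gauss_prec_density_Suc[OF pd] \<sigma>_def[symmetric] by (simp add: mult_ac)
  qed
  also have "\<dots> = (\<integral>\<^sup>+u. ennreal (gauss_kernel n (schur n P) u / gauss_const n (schur n P)) *
      (\<integral>\<^sup>+t. g u t \<partial>lborel) \<partial>lborel_vec n)"
    by (intro nn_integral_cong nn_integral_cmult) (use g in measurable)
  also have "\<dots> = (\<integral>\<^sup>+u. (\<integral>\<^sup>+t. g u t \<partial>lborel) \<partial>gauss_prec n (schur n P))"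
    by (rule nn_integral_gauss_prec[symmetric]) (use g in measurable)
  finally show ?thesis unfolding g_def \<sigma>_def .
qed

lemma nn_integral_gauss_prec_marginal:
  assumes pd: "pos_def_mat (Suc n) P" and f[measurable]: "f \<in> borel_measurable (lborel_vec n)"
  shows "(\<integral>\<^sup>+x. f (restrict x {..<n}) \<partial>gauss_prec (Suc n) P) = (\<integral>\<^sup>+u. f u \<partial>gauss_prec n (schur n P))"
proof -
  have p: "P n n > 0" using pos_def_mat_diag_pos[OF pd] .
  have rm: "(\<lambda>x. restrict x {..<n}) \<in> measurable (lborel_vec (Suc n)) (lborel_vec n)"
    by (rule measurable_restrict_subset) auto
  have "(\<integral>\<^sup>+x. f (restrict x {..<n}) \<partial>gauss_prec (Suc n) P) =
    (\<integral>\<^sup>+u. (\<integral>\<^sup>+t. f (restrict (u(n:=t)) {..<n}) * ennreal (normal_density (cond_mean n P u) (1 / sqrt (P n n)) t) \<partial>lborel) \<partial>gauss_prec n (schur n P))"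
    by (rule nn_integral_gauss_prec_Suc[OF pd]) (use measurable_comp[OF rm f] in \<open>simp add: comp_def\<close>)
  also have "\<dots> = (\<integral>\<^sup>+u. f u \<partial>gauss_prec n (schur n P))"
  proof (rule nn_integral_cong)
    fix u assume u: "u \<in> space (gauss_prec n (schur n P))"
    hence r: "restrict (u(n:=t)) {..<n} = u" for t
      by (auto simp: space_PiM PiE_def extensional_def restrict_def)
    have "(\<integral>\<^sup>+t. f u * ennreal (normal_density (cond_mean n P u) (1 / sqrt (P n n)) t) \<partial>lborel) = f u * 1"
      using p by (subst nn_integral_cmult) (auto simp: nn_integral_normal_density)
    thus "(\<integral>\<^sup>+t. f (restrict (u(n:=t)) {..<n}) * ennreal (normal_density (cond_mean n P u) (1 / sqrt (P n n)) t) \<partial>lborel) = f u"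
      by (simp add: r)
  qed
  finally show ?thesis .
qed

lemma nn_integral_affine_sq_normal:
  assumes s: "\<sigma> > 0"
  shows "(\<integral>\<^sup>+t. ennreal ((a + b*t)^2) * ennreal (normal_density m \<sigma> t) \<partial>lborel) = ennreal ((a + b*m)^2 + b^2*\<sigma>^2)"
proof -
  define A where "A = a + b * m"
  have eq: "(\<lambda>t. (a + b*t)^2 * normal_density m \<sigma> t) = (\<lambda>t. A^2 * normal_density m \<sigma> t
      + (2*A*b) * (normal_density m \<sigma> t * (t - m)^(2*0+1)) + b^2 * (normal_density m \<sigma> t * (t - m)^(2*1)))"
    by (rule ext) (simp add: A_def power2_eq_square algebra_simps)
  have i1: "integrable lborel (\<lambda>t. A^2 * normal_density m \<sigma> t)" using s by (intro integrable_mult_right integrable_normal_density) auto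
  have i2: "integrable lborel (\<lambda>t. (2*A*b) * (normal_density m \<sigma> t * (t - m)^(2*0+1)))"
    using s by (intro integrable_mult_right integrable_normal_moment) auto
  have i3: "integrable lborel (\<lambda>t. b^2 * (normal_density m \<sigma> t * (t - m)^(2*1)))"
    using s by (intro integrable_mult_right integrable_normal_moment) auto
  have int: "integrable lborel (\<lambda>t. (a + b*t)^2 * normal_density m \<sigma> t)"
    unfolding eq by (rule Bochner_Integration.integrable_add[OF Bochner_Integration.integrable_add[OF i1 i2] i3])
  have "(\<integral>t. (a + b*t)^2 * normal_density m \<sigma> t \<partial>lborel) = A^2 + b^2 * \<sigma>^2"
  proof -
    have "(\<integral>t. (a + b*t)^2 * normal_density m \<sigma> t \<partial>lborel) =
        A^2 * 1 + (2*A*b) * 0 + b^2 * (fact (2*1) / ((2 / \<sigma>^2)^1 * fact 1))"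
      unfolding eq
      by (simp only: Bochner_Integration.integral_add[OF Bochner_Integration.integrable_add[OF i1 i2] i3] Bochner_Integration.integral_add[OF i1 i2] integral_mult_right_zero
          integral_normal_density[OF s] integral_normal_moment_odd[OF s] integral_normal_moment_even[OF s])
    also have "\<dots> = A^2 + b^2 * \<sigma>^2" using s by (simp add: field_simps power2_eq_square)
    finally show ?thesis .
  qed
  moreover have "(\<integral>\<^sup>+t. ennreal ((a + b*t)^2) * ennreal (normal_density m \<sigma> t) \<partial>lborel)
      = (\<integral>\<^sup>+t. ennreal ((a + b*t)^2 * normal_density m \<sigma> t) \<partial>lborel)"
    by (intro nn_integral_cong) (simp add: ennreal_mult)
  ultimately show ?thesis
    using nn_integral_eq_integral[OF int] by (simp add: A_def)
qed

lemma lform_add_cond_mean: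
  "lform n c u + c n * cond_mean n P u = lform n (\<lambda>i. c i - c n * P n i / P n n) u"
proof -
  have "lform n (\<lambda>i. c i - c n * P n i / P n n) u = (\<Sum>i<n. c i * u i - (c n / P n n) * (P n i * u i))"
    unfolding lform_def by (intro sum.cong refl) (simp add: algebra_simps)
  also have "\<dots> = lform n c u - (c n / P n n) * lform n (P n) u"
    unfolding lform_def by (simp add: sum_subtractf sum_distrib_left)
  finally show ?thesis by (simp add: cond_mean_def)
qed

lemma nn_integral_lform_sq_last:
  assumes p: "P n n > 0"
  shows "(\<integral>\<^sup>+t. ennreal ((lform (Suc n) c (u(n:=t)))^2) *
      ennreal (normal_density (cond_mean n P u) (1 / sqrt (P n n)) t) \<partial>lborel) =
    ennreal ((lform n (\<lambda>i. c i - c n * P n i / P n n) u)^2) + ennreal ((c n)^2 / P n n)"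
proof -
  have "(\<integral>\<^sup>+t. ennreal ((lform (Suc n) c (u(n:=t)))^2) *
      ennreal (normal_density (cond_mean n P u) (1 / sqrt (P n n)) t) \<partial>lborel) =
      ennreal ((lform n c u + c n * cond_mean n P u)^2 + (c n)^2 * (1 / sqrt (P n n))^2)"
    unfolding lform_Suc_upd by (rule nn_integral_affine_sq_normal) (use p in simp)
  also have "\<dots> = ennreal ((lform n (\<lambda>i. c i - c n * P n i / P n n) u)^2) + ennreal ((c n)^2 / P n n)"
    unfolding lform_add_cond_mean using p by (subst ennreal_plus[symmetric]) (auto simp: power_divide)
  finally show ?thesis .
qed

lemma nn_integral_lform_sq:
  assumes "pos_def_mat n P" "is_inv n P S"
  shows "(\<integral>\<^sup>+x. ennreal ((lform n c x)^2) \<partial>gauss_prec n P) = ennreal (qform n S c)"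
  using assms
proof (induction n arbitrary: P S c)
  case 0
  thus ?case by (simp add: lform_def qform_def)
next
  case (Suc n)
  have pd: "pos_def_mat (Suc n) P" and inv: "is_inv (Suc n) P S" by fact+
  have p: "P n n > 0" using pos_def_mat_diag_pos[OF pd] .
  have inv': "is_inv n (schur n P) S" using is_inv_schur[OF inv] p by simp
  define c' where "c' i = c i - c n * P n i / P n n" for i
  interpret G: prob_space "gauss_prec n (schur n P)" by (rule prob_space_gauss_prec[OF pos_def_mat_schur[OF pd]])
  have "(\<integral>\<^sup>+x. ennreal ((lform (Suc n) c x)^2) \<partial>gauss_prec (Suc n) P) =
      (\<integral>\<^sup>+u. ennreal ((lform n c' u)^2) + ennreal ((c n)^2 / P n n) \<partial>gauss_prec n (schur n P))"
  proof -
    have "(\<lambda>x. ennreal ((lform (Suc n) c x)^2)) \<in> borel_measurable (lborel_vec (Suc n))" by measurable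
    from nn_integral_gauss_prec_Suc[OF pd this] show ?thesis
      unfolding nn_integral_lform_sq_last[where P=P and n=n, OF p] c'_def .
  qed
  also have "\<dots> = ennreal (qform n S c') + ennreal ((c n)^2 / P n n)"
    using G.emeasure_space_1
    by (subst nn_integral_add) (auto simp: Suc.IH[OF pos_def_mat_schur[OF pd] inv'])
  also have "\<dots> = ennreal (qform (Suc n) S c)"
  proof -
    have "qform n S c' \<ge> 0"
      by (rule pos_def_mat_qform_nonneg[OF pos_def_mat_is_inv[OF pos_def_mat_schur[OF pd] inv']])
    moreover have "qform (Suc n) S c = qform n S c' + (c n)^2 / P n n"
      unfolding c'_def by (rule qform_Suc_inv[OF inv pos_def_mat_sym[OF pd]]) (use p in simp)
    ultimately show ?thesis using p by (simp add: ennreal_plus)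
  qed
  finally show ?case .
qed

section \<open>Volume-preserving maps of \<open>\<real>\<^sup>n\<close>\<close>

lemma measurable_affine_vec: "(\<lambda>x. \<lambda>i\<in>{..<n}. a i + s i * x i) \<in> measurable (lborel_vec n) (lborel_vec n)"
proof (rule measurable_restrict)
  fix i assume "i \<in> {..<n}"
  thus "(\<lambda>x. a i + s i * x i) \<in> measurable (lborel_vec n) lborel"
    unfolding measurable_lborel1
    by (intro borel_measurable_add borel_measurable_times borel_measurable_const measurable_component) auto
qed

lemma measurable_translate_vec: "(\<lambda>y. \<lambda>i\<in>{..<n}. y i + a i) \<in> measurable (lborel_vec n) (lborel_vec n)"
  using measurable_affine_vec[of a "\<lambda>_. 1" n] by (simp add: add.commute)

lemma nn_integral_lborel_vec_affine:
  assumes s: "\<And>i. s i = 1 \<or> s i = -1" and f: "f \<in> borel_measurable (lborel_vec n)"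
  shows "(\<integral>\<^sup>+x. f (\<lambda>i\<in>{..<n}. a i + s i * x i) \<partial>lborel_vec n) = (\<integral>\<^sup>+x. f x \<partial>lborel_vec n)"
  using f
proof (induction n arbitrary: f)
  case 0
  thus ?case by (simp add: PiM_empty nn_integral_count_space_finite)
next
  case (Suc n)
  note f = Suc.prems
  define T where "T m x = (\<lambda>i\<in>{..<m}. a i + s i * x i)" for m and x :: "nat \<Rightarrow> real"
  have T_meas: "T m \<in> measurable (lborel_vec m) (lborel_vec m)" for m unfolding T_def by (rule measurable_affine_vec)
  define g' where "g' v = (\<integral>\<^sup>+t. f (v(n:=t)) \<partial>lborel)" for v
  have g'm: "g' \<in> borel_measurable (lborel_vec n)" unfolding g'_def by (rule measurable_nn_integral_last[OF f])
  have "(\<integral>\<^sup>+x. f (T (Suc n) x) \<partial>lborel_vec (Suc n)) = (\<integral>\<^sup>+u. (\<integral>\<^sup>+t. f (T (Suc n) (u(n:=t))) \<partial>lborel) \<partial>lborel_vec n)"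
    by (rule nn_integral_lborel_vec_Suc) (use measurable_comp[OF T_meas f] in \<open>simp add: comp_def\<close>)
  also have "\<dots> = (\<integral>\<^sup>+u. g' (T n u) \<partial>lborel_vec n)"
  proof (rule nn_integral_cong)
    fix u assume u: "u \<in> space (lborel_vec n)"
    have e: "T (Suc n) (u(n:=t)) = (T n u)(n := a n + s n * t)" for t
      unfolding T_def by (rule ext) (auto simp: restrict_def)
    have Tu: "T n u \<in> space (lborel_vec n)" using measurable_space[OF T_meas u] .
    have um: "(\<lambda>t. (T n u)(n:=t)) \<in> measurable lborel (lborel_vec (Suc n))"
      using measurable_component_update[OF Tu, of n] by (simp add: lessThan_Suc)
    have gm: "(\<lambda>t. f ((T n u)(n:=t))) \<in> borel_measurable borel"
      using measurable_comp[OF um f] by (simp add: comp_def)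
    have sn: "s n \<noteq> 0" "\<bar>s n\<bar> = 1" using s[of n] by auto
    show "(\<integral>\<^sup>+t. f (T (Suc n) (u(n:=t))) \<partial>lborel) = g' (T n u)"
      unfolding e g'_def using nn_integral_real_affine[OF gm sn(1), of "a n"] sn(2) by simp
  qed
  also have "\<dots> = (\<integral>\<^sup>+u. g' u \<partial>lborel_vec n)" unfolding T_def by (rule Suc.IH[OF g'm])
  also have "\<dots> = (\<integral>\<^sup>+x. f x \<partial>lborel_vec (Suc n))" unfolding g'_def by (rule nn_integral_lborel_vec_Suc[OF f, symmetric])
  finally show ?case unfolding T_def .
qed

lemma nn_integral_gauss_prec_neg:
  assumes f: "f \<in> borel_measurable (lborel_vec n)"
  shows "(\<integral>\<^sup>+x. f (\<lambda>i\<in>{..<n}. - x i) \<partial>gauss_prec n P) = (\<integral>\<^sup>+x. f x \<partial>gauss_prec n P)"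
proof -
  define neg where "neg x = (\<lambda>i\<in>{..<n}. 0 + (-1) * x i)" for x :: "nat \<Rightarrow> real"
  have neg_meas: "neg \<in> measurable (lborel_vec n) (lborel_vec n)" unfolding neg_def by (rule measurable_affine_vec)
  have neg: "(\<lambda>i\<in>{..<n}. - x i) = neg x" for x unfolding neg_def by simp
  have kernel: "gauss_kernel n P (neg x) = gauss_kernel n P x" for x
  proof -
    have "qform n P (neg x) = qform n P (\<lambda>i. - x i)" by (rule qform_cong) (simp add: neg_def)
    also have "\<dots> = qform n P x" unfolding qform_def by simp
    finally show ?thesis by (simp add: gauss_kernel_def)
  qed
  have "(\<integral>\<^sup>+x. f (neg x) \<partial>gauss_prec n P) = (\<integral>\<^sup>+x. ennreal (gauss_kernel n P x / gauss_const n P) * f (neg x) \<partial>lborel_vec n)"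
    by (rule nn_integral_gauss_prec) (use measurable_comp[OF neg_meas f] in \<open>simp add: comp_def\<close>)
  also have "\<dots> = (\<integral>\<^sup>+x. (\<lambda>y. ennreal (gauss_kernel n P y / gauss_const n P) * f y) (neg x) \<partial>lborel_vec n)"
    by (simp add: kernel)
  also have "\<dots> = (\<integral>\<^sup>+y. ennreal (gauss_kernel n P y / gauss_const n P) * f y \<partial>lborel_vec n)"
    unfolding neg_def by (rule nn_integral_lborel_vec_affine) (use f in auto)
  also have "\<dots> = (\<integral>\<^sup>+x. f x \<partial>gauss_prec n P)" by (rule nn_integral_gauss_prec[OF f, symmetric])
  finally show ?thesis unfolding neg .
qed

lemma integral_lform_gauss_prec:
  assumes int: "integrable (gauss_prec n P) (\<lambda>x. lform n c x)"
  shows "(\<integral>x. lform n c x \<partial>gauss_prec n P) = 0"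
proof -
  have neg: "lform n c (\<lambda>i\<in>{..<n}. - x i) = - lform n c x" for x
  proof -
    have "lform n c (\<lambda>i\<in>{..<n}. - x i) = lform n c (\<lambda>i. - x i)" by (rule lform_cong) simp
    thus ?thesis by (simp add: lform_def sum_negf)
  qed
  have "(\<integral>\<^sup>+x. ennreal (lform n c x) \<partial>gauss_prec n P) = (\<integral>\<^sup>+x. ennreal (lform n c (\<lambda>i\<in>{..<n}. - x i)) \<partial>gauss_prec n P)"
    by (rule nn_integral_gauss_prec_neg[symmetric]) measurable
  also have "\<dots> = (\<integral>\<^sup>+x. ennreal (- lform n c x) \<partial>gauss_prec n P)" by (simp add: neg)
  finally show ?thesis by (simp add: real_lebesgue_integral_def[OF int])
qed

lemma measurable_permute_vec:
  assumes "\<And>a. a < m \<Longrightarrow> \<sigma> a < m"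
  shows "(\<lambda>w. \<lambda>a\<in>{..<m}. w (\<sigma> a)) \<in> measurable (lborel_vec m) (lborel_vec m)"
  by (rule measurable_restrict) (auto intro!: measurable_component assms simp: measurable_lborel1)

lemma distr_lborel_vec_permute:
  assumes bij: "bij_betw \<sigma> {..<m} {..<m}"
  shows "distr (lborel_vec m) (lborel_vec m) (\<lambda>w. \<lambda>a\<in>{..<m}. w (\<sigma> a)) = lborel_vec m"
proof (rule lborel_product.PiM_eqI)
  fix A :: "nat \<Rightarrow> real set" assume A: "\<And>i. i \<in> {..<m} \<Longrightarrow> A i \<in> sets lborel"
  define \<tau> where "\<tau> = the_inv_into {..<m} \<sigma>"
  have sig: "\<sigma> a < m" if "a < m" for a using bij that by (auto simp: bij_betw_def)
  have tau: "\<sigma> (\<tau> b) = b" "\<tau> b < m" if "b < m" for b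
    unfolding \<tau>_def using bij that
    by (auto intro!: f_the_inv_into_f_bij_betw the_inv_into_into simp: bij_betw_def)
  have tau_sig: "\<tau> (\<sigma> a) = a" if "a < m" for a
    unfolding \<tau>_def using bij that by (auto intro!: the_inv_into_f_f simp: bij_betw_def)
  have pre: "(\<lambda>w. \<lambda>a\<in>{..<m}. w (\<sigma> a)) -` Pi\<^sub>E {..<m} A \<inter> space (lborel_vec m) =
      Pi\<^sub>E {..<m} (\<lambda>b. A (\<tau> b))"
    using sig tau tau_sig by (auto simp: space_PiM PiE_def Pi_def) metis+
  have "emeasure (distr (lborel_vec m) (lborel_vec m) (\<lambda>w. \<lambda>a\<in>{..<m}. w (\<sigma> a))) (Pi\<^sub>E {..<m} A) =
      emeasure (lborel_vec m) (Pi\<^sub>E {..<m} (\<lambda>b. A (\<tau> b)))"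
    by (subst emeasure_distr[OF measurable_permute_vec[OF sig]]) (use A in \<open>auto simp: pre\<close>)
  also have "\<dots> = (\<Prod>b<m. emeasure lborel (A (\<tau> b)))"
    by (rule lborel_product.emeasure_PiM) (use A tau in auto)
  also have "\<dots> = (\<Prod>a<m. emeasure lborel (A a))"
    using prod.reindex_bij_betw[OF bij, of "\<lambda>b. emeasure lborel (A (\<tau> b))"] tau_sig by simp
  finally show "emeasure (distr (lborel_vec m) (lborel_vec m) (\<lambda>w. \<lambda>a\<in>{..<m}. w (\<sigma> a)))
      (Pi\<^sub>E {..<m} A) = (\<Prod>i<m. emeasure lborel (A i))" .
qed simp_all

lemma nn_integral_lborel_vec_permute:
  assumes bij: "bij_betw \<sigma> {..<m} {..<m}" and g: "g \<in> borel_measurable (lborel_vec m)"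
  shows "(\<integral>\<^sup>+w. g (\<lambda>a\<in>{..<m}. w (\<sigma> a)) \<partial>lborel_vec m) = (\<integral>\<^sup>+w. g w \<partial>lborel_vec m)"
proof -
  have "\<sigma> a < m" if "a < m" for a using bij that by (auto simp: bij_betw_def)
  hence R: "(\<lambda>w. \<lambda>a\<in>{..<m}. w (\<sigma> a)) \<in> measurable (lborel_vec m) (lborel_vec m)"
    by (rule measurable_permute_vec)
  have "(\<integral>\<^sup>+w. g w \<partial>distr (lborel_vec m) (lborel_vec m) (\<lambda>w. \<lambda>a\<in>{..<m}. w (\<sigma> a))) =
      (\<integral>\<^sup>+w. g (\<lambda>a\<in>{..<m}. w (\<sigma> a)) \<partial>lborel_vec m)"
    by (rule nn_integral_distr[OF R]) (use g in simp)
  thus ?thesis unfolding distr_lborel_vec_permute[OF bij] by simp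
qed

lemma nn_integral_lborel_vec_shear:
  assumes g: "g \<in> borel_measurable (lborel_vec (Suc n))"
  shows "(\<integral>\<^sup>+z. g (\<lambda>i\<in>{..<Suc n}. if i < n then z n - z i else z n) \<partial>lborel_vec (Suc n)) = (\<integral>\<^sup>+z. g z \<partial>lborel_vec (Suc n))"
proof -
  define Sh where "Sh z = (\<lambda>i\<in>{..<Suc n}. if i < n then z n - z i else z n)" for z :: "nat \<Rightarrow> real"
  have Shm: "Sh \<in> measurable (lborel_vec (Suc n)) (lborel_vec (Suc n))"
    unfolding Sh_def
  proof (rule measurable_restrict)
    fix i assume i: "i \<in> {..<Suc n}"
    show "(\<lambda>z. if i < n then z n - z i else z n) \<in> measurable (lborel_vec (Suc n)) lborel"
      unfolding measurable_lborel1 using i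
      by (cases "i < n") (auto intro!: borel_measurable_diff measurable_component)
  qed
  have "(\<integral>\<^sup>+z. g (Sh z) \<partial>lborel_vec (Suc n)) = (\<integral>\<^sup>+t. (\<integral>\<^sup>+u. g (Sh (u(n:=t))) \<partial>lborel_vec n) \<partial>lborel)"
    by (rule nn_integral_lborel_vec_Suc_rev) (use measurable_comp[OF Shm g] in \<open>simp add: comp_def\<close>)
  also have "\<dots> = (\<integral>\<^sup>+t. (\<integral>\<^sup>+u. g (u(n:=t)) \<partial>lborel_vec n) \<partial>lborel)"
  proof (rule nn_integral_cong)
    fix t :: real
    have gt: "(\<lambda>v. g (v(n:=t))) \<in> borel_measurable (lborel_vec n)"
      using measurable_comp[OF measurable_fun_upd_const g] by (simp add: comp_def)
    have "(\<integral>\<^sup>+u. g (Sh (u(n:=t))) \<partial>lborel_vec n) = (\<integral>\<^sup>+u. (\<lambda>v. g (v(n:=t))) (\<lambda>i\<in>{..<n}. t + (-1) * u i) \<partial>lborel_vec n)"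
    proof (rule nn_integral_cong)
      fix u assume u: "u \<in> space (lborel_vec n)"
      have "Sh (u(n:=t)) = (\<lambda>i\<in>{..<n}. t + (-1) * u i)(n := t)"
        unfolding Sh_def by (rule ext) (auto simp: restrict_def)
      thus "g (Sh (u(n:=t))) = (\<lambda>v. g (v(n:=t))) (\<lambda>i\<in>{..<n}. t + (-1) * u i)" by simp
    qed
    also have "\<dots> = (\<integral>\<^sup>+u. g (u(n:=t)) \<partial>lborel_vec n)"
      by (rule nn_integral_lborel_vec_affine[OF _ gt]) simp
    finally show "(\<integral>\<^sup>+u. g (Sh (u(n:=t))) \<partial>lborel_vec n) = (\<integral>\<^sup>+u. g (u(n:=t)) \<partial>lborel_vec n)" .
  qed
  also have "\<dots> = (\<integral>\<^sup>+z. g z \<partial>lborel_vec (Suc n))" by (rule nn_integral_lborel_vec_Suc_rev[OF g, symmetric])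
  finally show ?thesis unfolding Sh_def .
qed

lemma null_sets_lborel_vec_coord_eq:
  assumes i: "i < n"
  shows "{z \<in> space (lborel_vec n). z i = c} \<in> null_sets (lborel_vec n)"
proof -
  have e: "{z \<in> space (lborel_vec n). z i = c} = Pi\<^sub>E {..<n} (\<lambda>k. if k = i then {c} else UNIV)"
    using i by (auto simp: space_PiM PiE_def Pi_def split: if_splits)
  have s: "Pi\<^sub>E {..<n} (\<lambda>k. if k = i then {c} else UNIV) \<in> sets (lborel_vec n)"
    by (rule sets_PiM_I_finite) auto
  have "emeasure (lborel_vec n) (Pi\<^sub>E {..<n} (\<lambda>k. if k = i then {c} else UNIV)) =
      (\<Prod>k<n. emeasure lborel (if k = i then {c} else UNIV))"
    by (rule lborel_product.emeasure_PiM) auto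
  also have "\<dots> = 0" using i by (intro prod_zero) auto
  finally show ?thesis unfolding e using s by (intro null_setsI) auto
qed

section \<open>Differences with respect to one coordinate\<close>

definition move_to_last :: "nat \<Rightarrow> nat \<Rightarrow> nat \<Rightarrow> nat" where
  "move_to_last j n a = (if a = j then n else if a < j then a else a - 1)"

text \<open>For \<open>y \<in> \<real>\<^sup>n\<^sup>+\<^sup>1\<close> this is the paper's \<open>\<Delta>\<^sup>j\<close>; \<open>skip j\<close> enumerates the indices other than \<open>j\<close>.\<close>

definition deltas :: "nat \<Rightarrow> nat \<Rightarrow> (nat \<Rightarrow> real) \<Rightarrow> nat \<Rightarrow> real" where
  "deltas j n y = (\<lambda>i\<in>{..<n}. y j - y (skip j i))"

text \<open>\<open>undelta j n\<close> inverts \<open>y \<mapsto> (deltas j n y, y j)\<close>: the coordinates below \<open>n\<close> of \<open>z\<close>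
  hold the differences and \<open>z n\<close> holds \<open>y j\<close>.\<close>

definition undelta :: "nat \<Rightarrow> nat \<Rightarrow> (nat \<Rightarrow> real) \<Rightarrow> nat \<Rightarrow> real" where
  "undelta j n z = (\<lambda>a\<in>{..<Suc n}. if a = j then z n else z n - z (move_to_last j n a))"

lemma move_to_last_less: "j \<le> n \<Longrightarrow> a < Suc n \<Longrightarrow> a \<noteq> j \<Longrightarrow> move_to_last j n a < n"
  unfolding move_to_last_def by auto

lemma move_to_last_skip: "i < n \<Longrightarrow> j \<le> n \<Longrightarrow> move_to_last j n (skip j i) = i"
  unfolding move_to_last_def skip_def by auto

lemma skip_neq: "skip j i \<noteq> j" unfolding skip_def by auto

lemma skip_less_Suc: "i < n \<Longrightarrow> skip j i < Suc n" unfolding skip_def by auto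

lemma skip_move_to_last: "k \<noteq> j \<Longrightarrow> k < Suc n \<Longrightarrow> j \<le> n \<Longrightarrow> skip j (move_to_last j n k) = k"
  unfolding skip_def move_to_last_def by auto

lemma skip_less_iff: "skip j i < j \<longleftrightarrow> i < j" unfolding skip_def by auto

lemma bij_betw_move_to_last: assumes "j \<le> n" shows "bij_betw (move_to_last j n) {..<Suc n} {..<Suc n}"
proof (rule bij_betw_byWitness[where f' = "\<lambda>b. if b = n then j else skip j b"])
  show "\<forall>a\<in>{..<Suc n}. (if move_to_last j n a = n then j else skip j (move_to_last j n a)) = a"
    using assms by (auto simp: move_to_last_def skip_def)
  show "\<forall>a'\<in>{..<Suc n}. move_to_last j n (if a' = n then j else skip j a') = a'"
    using assms by (auto simp: move_to_last_def skip_def)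
  show "move_to_last j n ` {..<Suc n} \<subseteq> {..<Suc n}" using assms by (auto simp: move_to_last_def)
  show "(\<lambda>b. if b = n then j else skip j b) ` {..<Suc n} \<subseteq> {..<Suc n}" using assms by (auto simp: skip_def)
qed

lemma nn_integral_lborel_vec_undelta:
  assumes j: "j \<le> n" and f: "f \<in> borel_measurable (lborel_vec (Suc n))"
  shows "(\<integral>\<^sup>+z. f (undelta j n z) \<partial>lborel_vec (Suc n)) = (\<integral>\<^sup>+z. f z \<partial>lborel_vec (Suc n))"
proof -
  define R where "R w = (\<lambda>a\<in>{..<Suc n}. w (move_to_last j n a))" for w :: "nat \<Rightarrow> real"
  have sl: "move_to_last j n a < Suc n" if "a < Suc n" for a
    using bij_betw_move_to_last[OF j] that by (auto simp: bij_betw_def)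
  have Rm: "R \<in> measurable (lborel_vec (Suc n)) (lborel_vec (Suc n))"
    unfolding R_def using sl by (rule measurable_permute_vec)
  have e: "undelta j n z = R (\<lambda>i\<in>{..<Suc n}. if i < n then z n - z i else z n)" for z
    unfolding undelta_def R_def using sl move_to_last_less[OF j] j by (intro ext) (auto simp: move_to_last_def)
  have "(\<integral>\<^sup>+z. f (undelta j n z) \<partial>lborel_vec (Suc n)) =
      (\<integral>\<^sup>+z. (\<lambda>w. f (R w)) (\<lambda>i\<in>{..<Suc n}. if i < n then z n - z i else z n) \<partial>lborel_vec (Suc n))"
    unfolding e by simp
  also have "\<dots> = (\<integral>\<^sup>+w. f (R w) \<partial>lborel_vec (Suc n))"
    by (rule nn_integral_lborel_vec_shear) (use measurable_comp[OF Rm f] in \<open>simp add: comp_def\<close>)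
  also have "\<dots> = (\<integral>\<^sup>+w. f w \<partial>lborel_vec (Suc n))"
    unfolding R_def by (rule nn_integral_lborel_vec_permute[OF bij_betw_move_to_last[OF j] f])
  finally show ?thesis .
qed

definition undelta_mat :: "nat \<Rightarrow> nat \<Rightarrow> nat \<Rightarrow> nat \<Rightarrow> real" where
  "undelta_mat j n a b = (if b = n then 1 else 0) - (if a \<noteq> j \<and> b = move_to_last j n a then 1 else 0)"

lemma undelta_eq_sum:
  assumes j: "j \<le> n" and a: "a < Suc n"
  shows "undelta j n z a = (\<Sum>b<Suc n. undelta_mat j n a b * z b)"
proof -
  have "(\<Sum>b<Suc n. undelta_mat j n a b * z b) = (\<Sum>b<Suc n. (if b = n then z b else 0) - (if a \<noteq> j \<and> b = move_to_last j n a then z b else 0))"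
    by (rule sum.cong) (auto simp: undelta_mat_def)
  also have "\<dots> = (\<Sum>b<Suc n. (if b = n then z b else 0)) - (\<Sum>b<Suc n. (if a \<noteq> j \<and> b = move_to_last j n a then z b else 0))"
    by (rule sum_subtractf)
  also have "(\<Sum>b<Suc n. (if b = n then z b else 0)) = z n" by simp
  also have "(\<Sum>b<Suc n. (if a \<noteq> j \<and> b = move_to_last j n a then z b else 0)) = (if a \<noteq> j then z (move_to_last j n a) else 0)"
  proof (cases "a = j")
    case False
    hence "move_to_last j n a < Suc n" using move_to_last_less[OF j a] by simp
    thus ?thesis using False by simp
  qed simp
  finally show ?thesis unfolding undelta_def using a by simp
qed

text \<open>The precision matrix of \<open>(deltas j n y, y j)\<close> when \<open>y\<close> has precision \<open>P\<close>.\<close>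

definition delta_prec :: "nat \<Rightarrow> nat \<Rightarrow> (nat \<Rightarrow> nat \<Rightarrow> real) \<Rightarrow> nat \<Rightarrow> nat \<Rightarrow> real" where
  "delta_prec j n P = congr_mat (Suc n) (undelta_mat j n) P"

lemma qform_delta_prec: assumes j: "j \<le> n" shows "qform (Suc n) (delta_prec j n P) z = qform (Suc n) P (undelta j n z)"
proof -
  have "qform (Suc n) P (undelta j n z) = qform (Suc n) P (\<lambda>a. \<Sum>b<Suc n. undelta_mat j n a b * z b)"
    by (rule qform_cong) (simp add: undelta_eq_sum[OF j])
  thus ?thesis unfolding delta_prec_def qform_linear_subst by simp
qed

lemma pos_def_mat_delta_prec:
  assumes pd: "pos_def_mat (Suc n) P" and j: "j \<le> n"
  shows "pos_def_mat (Suc n) (delta_prec j n P)"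
proof -
  have "sym_mat (Suc n) (delta_prec j n P)" unfolding delta_prec_def by (rule sym_mat_congr_mat[OF pos_def_mat_sym[OF pd]])
  moreover have "qform (Suc n) (delta_prec j n P) z > 0" if ex: "\<exists>i<Suc n. z i \<noteq> 0" for z
  proof -
    have "\<exists>a<Suc n. undelta j n z a \<noteq> 0"
    proof (cases "z n = 0")
      case False
      thus ?thesis using j by (intro exI[of _ j]) (auto simp: undelta_def)
    next
      case True
      obtain i where i: "i < Suc n" "z i \<noteq> 0" using ex by blast
      hence i': "i < n" using True by (cases "i = n") auto
      have "undelta j n z (skip j i) = - z i"
        unfolding undelta_def using skip_less_Suc[OF i'] skip_neq[of j i] move_to_last_skip[OF i' j] True by simp
      thus ?thesis using skip_less_Suc[OF i'] i by (intro exI[of _ "skip j i"]) auto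
    qed
    then obtain a where "a < Suc n" "undelta j n z a \<noteq> 0" by blast
    hence "qform (Suc n) P (undelta j n z) > 0" by (rule pos_def_mat_qform_pos[OF pd])
    thus ?thesis by (simp add: qform_delta_prec[OF j])
  qed
  ultimately show ?thesis unfolding pos_def_mat_iff by blast
qed

lemma undelta_measurable: "j \<le> n \<Longrightarrow> undelta j n \<in> measurable (lborel_vec (Suc n)) (lborel_vec (Suc n))"
  unfolding undelta_def
proof (rule measurable_restrict)
  fix a assume j: "j \<le> n" and a: "a \<in> {..<Suc n}"
  show "(\<lambda>z. if a = j then z n else z n - z (move_to_last j n a)) \<in> measurable (lborel_vec (Suc n)) lborel"
    unfolding measurable_lborel1 using a move_to_last_less[OF j, of a]
    by (cases "a = j") (auto intro!: borel_measurable_diff measurable_component)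
qed

lemma nn_integral_gauss_prec_undelta:
  assumes pd: "pos_def_mat (Suc n) P" and j: "j \<le> n" and f: "f \<in> borel_measurable (lborel_vec (Suc n))"
  shows "(\<integral>\<^sup>+y. f y \<partial>gauss_prec (Suc n) P) = (\<integral>\<^sup>+z. f (undelta j n z) \<partial>gauss_prec (Suc n) (delta_prec j n P))"
proof -
  let ?Q = "delta_prec j n P"
  have pdQ: "pos_def_mat (Suc n) ?Q" by (rule pos_def_mat_delta_prec[OF pd j])
  have hh: "gauss_kernel (Suc n) P (undelta j n z) = gauss_kernel (Suc n) ?Q z" for z by (simp add: gauss_kernel_def qform_delta_prec[OF j])
  have "ennreal (gauss_const (Suc n) ?Q) = (\<integral>\<^sup>+z. ennreal (gauss_kernel (Suc n) P (undelta j n z)) \<partial>lborel_vec (Suc n))"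
    unfolding hh by (rule nn_integral_gauss_kernel[OF pdQ, symmetric])
  also have "\<dots> = ennreal (gauss_const (Suc n) P)"
    by (subst nn_integral_lborel_vec_undelta[OF j]) (auto simp: nn_integral_gauss_kernel[OF pd])
  finally have zz: "gauss_const (Suc n) ?Q = gauss_const (Suc n) P"
    using gauss_const_pos[OF pd] gauss_const_pos[OF pdQ] by simp
  have "(\<integral>\<^sup>+y. f y \<partial>gauss_prec (Suc n) P) = (\<integral>\<^sup>+y. ennreal (gauss_kernel (Suc n) P y / gauss_const (Suc n) P) * f y \<partial>lborel_vec (Suc n))"
    by (rule nn_integral_gauss_prec[OF f])
  also have "\<dots> = (\<integral>\<^sup>+z. ennreal (gauss_kernel (Suc n) P (undelta j n z) / gauss_const (Suc n) P) * f (undelta j n z) \<partial>lborel_vec (Suc n))"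
    by (rule nn_integral_lborel_vec_undelta[OF j, symmetric]) (use f in measurable)
  also have "\<dots> = (\<integral>\<^sup>+z. ennreal (gauss_kernel (Suc n) ?Q z / gauss_const (Suc n) ?Q) * f (undelta j n z) \<partial>lborel_vec (Suc n))"
    by (simp add: hh zz)
  also have "\<dots> = (\<integral>\<^sup>+z. f (undelta j n z) \<partial>gauss_prec (Suc n) ?Q)"
    by (rule nn_integral_gauss_prec[symmetric]) (use measurable_comp[OF undelta_measurable[OF j] f] in \<open>simp add: comp_def\<close>)
  finally show ?thesis .
qed

lemma deltas_undelta: "j \<le> n \<Longrightarrow> deltas j n (undelta j n z) = restrict z {..<n}"
  using skip_less_Suc[of _ n j] skip_neq[of j] move_to_last_skip[of _ n j]
  by (auto simp: deltas_def undelta_def restrict_def)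

lemma deltas_shift_measurable:
  assumes j: "j \<le> n"
  shows "(\<lambda>y. deltas j n (\<lambda>i. y i - c i)) \<in> measurable (lborel_vec (Suc n)) (lborel_vec n)"
  unfolding deltas_def
proof (rule measurable_restrict)
  fix i assume "i \<in> {..<n}"
  thus "(\<lambda>y. (y j - c j) - (y (skip j i) - c (skip j i))) \<in> measurable (lborel_vec (Suc n)) lborel"
    using j skip_less_Suc[of i n j] unfolding measurable_lborel1
    by (intro borel_measurable_diff borel_measurable_const measurable_component) auto
qed

lemma deltas_measurable: "j \<le> n \<Longrightarrow> deltas j n \<in> measurable (lborel_vec (Suc n)) (lborel_vec n)"
  using deltas_shift_measurable[of j n "\<lambda>_. 0"] by simp

lemma nn_integral_indicator_deltas:
  assumes pd: "pos_def_mat (Suc n) P" and j: "j \<le> n"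
  shows "(\<integral>\<^sup>+y. indicator (Pi\<^sub>E {..<n} (\<lambda>i. if i < j then {..<b i} else {..b i})) (deltas j n y)
      \<partial>gauss_prec (Suc n) P) =
    emeasure (gauss_prec n (schur n (delta_prec j n P))) (Pi\<^sub>E {..<n} (\<lambda>i. {..b i}))"
proof -
  define B where "B = Pi\<^sub>E {..<n} (\<lambda>i. if i < j then {..<b i} else {..b i})"
  define Bx where "Bx = Pi\<^sub>E {..<n} (\<lambda>i. {..b i})"
  let ?Q = "delta_prec j n P"
  have pdQ: "pos_def_mat (Suc n) ?Q" by (rule pos_def_mat_delta_prec[OF pd j])
  have Bs: "B \<in> sets (lborel_vec n)" unfolding B_def by (rule sets_PiM_I_finite) auto
  have Bxs: "Bx \<in> sets (lborel_vec n)" unfolding Bx_def by (rule sets_PiM_I_finite) auto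
  have im: "(\<lambda>u. indicator B u :: ennreal) \<in> borel_measurable (lborel_vec n)" using Bs by measurable
  have "(\<integral>\<^sup>+y. indicator B (deltas j n y) \<partial>gauss_prec (Suc n) P)
      = (\<integral>\<^sup>+z. indicator B (deltas j n (undelta j n z)) \<partial>gauss_prec (Suc n) ?Q)"
    by (rule nn_integral_gauss_prec_undelta[OF pd j])
       (use measurable_comp[OF deltas_measurable[OF j] im] in \<open>simp add: comp_def\<close>)
  also have "\<dots> = (\<integral>\<^sup>+u. indicator B u \<partial>gauss_prec n (schur n ?Q))"
    unfolding deltas_undelta[OF j] by (rule nn_integral_gauss_prec_marginal[OF pdQ im])
  also have "\<dots> = emeasure (gauss_prec n (schur n ?Q)) B"
    by (rule nn_integral_indicator) (use Bs in simp)
  also have "\<dots> = emeasure (gauss_prec n (schur n ?Q)) Bx"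
  proof (rule emeasure_eq_AE)
    have "AE z in lborel_vec n. \<forall>i\<in>{..<n}. z i \<noteq> b i"
    proof (rule AE_finite_allI)
      fix i assume "i \<in> {..<n}"
      thus "AE z in lborel_vec n. z i \<noteq> b i"
        by (intro AE_I'[OF null_sets_lborel_vec_coord_eq[of i n "b i"]]) auto
    qed simp
    hence "AE z in gauss_prec n (schur n ?Q). \<forall>i\<in>{..<n}. z i \<noteq> b i"
      unfolding gauss_prec_def by (subst AE_density) (auto elim!: eventually_mono)
    thus "AE z in gauss_prec n (schur n ?Q). z \<in> B \<longleftrightarrow> z \<in> Bx"
      by (rule eventually_mono) (auto simp: B_def Bx_def PiE_def Pi_def less_le)
  qed (use Bs Bxs in auto)
  finally show ?thesis unfolding B_def Bx_def .
qed

section \<open>Tilting and the first minimiser\<close>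

lemma qform_minus_column:
  assumes inv: "is_inv d P \<Gamma>" and sy: "sym_mat d P" and j: "j < d"
  shows "qform d P (\<lambda>i. y i - \<Gamma> i j) = qform d P y - 2 * y j + \<Gamma> j j"
proof -
  have col: "(\<Sum>k<d. P i k * \<Gamma> k j) = (if i = j then 1 else 0)" if "i < d" for i
    using inv that j unfolding is_inv_def by blast
  have "(\<Sum>i<d. \<Sum>k<d. y i * P i k * \<Gamma> k j) = (\<Sum>i<d. y i * (if i = j then 1 else 0))"
    by (intro sum.cong refl) (simp add: sum_distrib_left[symmetric] mult.assoc col)
  hence T: "(\<Sum>i<d. \<Sum>k<d. y i * P i k * \<Gamma> k j) = y j" by (simp add: sum_delta_mult_right[OF j])
  have "(\<Sum>i<d. \<Sum>k<d. \<Gamma> i j * P i k * y k) = (\<Sum>k<d. \<Sum>i<d. y k * P k i * \<Gamma> i j)"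
    using sy unfolding sym_mat_def by (subst sum.swap) (auto intro!: sum.cong simp: mult_ac)
  hence U: "(\<Sum>i<d. \<Sum>k<d. \<Gamma> i j * P i k * y k) = y j" using T by simp
  have "qform d P (\<lambda>i. \<Gamma> i j) = (\<Sum>i<d. \<Gamma> i j * (if i = j then 1 else 0))"
    unfolding qform_def by (intro sum.cong refl) (simp add: sum_distrib_left[symmetric] mult.assoc col)
  hence Q: "qform d P (\<lambda>i. \<Gamma> i j) = \<Gamma> j j" by (simp add: sum_delta_mult_right[OF j])
  show ?thesis using qform_diff[of d P y 1 "\<lambda>i. \<Gamma> i j"] unfolding T U Q by simp
qed

lemma gauss_kernel_tilt:
  assumes "is_inv d P \<Gamma>" "sym_mat d P" "j < d"
  shows "gauss_kernel d P y * exp (y j - \<Gamma> j j / 2) = gauss_kernel d P (\<lambda>i. y i - \<Gamma> i j)"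
  unfolding gauss_kernel_def qform_minus_column[OF assms] by (simp add: exp_add[symmetric] field_simps)

lemma nn_integral_gauss_prec_tilt:
  assumes pd: "pos_def_mat d P" and inv: "is_inv d P \<Gamma>" and j: "j < d"
    and f[measurable]: "f \<in> borel_measurable (lborel_vec d)"
  shows "(\<integral>\<^sup>+y. f y * ennreal (exp (y j - \<Gamma> j j / 2)) \<partial>gauss_prec d P) =
    (\<integral>\<^sup>+y. f (\<lambda>i\<in>{..<d}. y i + \<Gamma> i j) \<partial>gauss_prec d P)"
proof -
  define c where "c = gauss_const d P"
  define g where "g y = ennreal (gauss_kernel d P (\<lambda>i. y i - \<Gamma> i j) / c) * f y" for y
  have c: "c > 0" unfolding c_def by (rule gauss_const_pos[OF pd])
  note [measurable] = measurable_component[OF j] measurable_translate_vec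
  have "(\<lambda>y. qform d P (\<lambda>i. y i - \<Gamma> i j)) \<in> borel_measurable (lborel_vec d)"
    unfolding qform_def
    by (intro borel_measurable_sum borel_measurable_times borel_measurable_diff borel_measurable_const
        measurable_component) auto
  hence gm: "g \<in> borel_measurable (lborel_vec d)" unfolding g_def gauss_kernel_def by measurable
  have "(\<integral>\<^sup>+y. f y * ennreal (exp (y j - \<Gamma> j j / 2)) \<partial>gauss_prec d P) =
      (\<integral>\<^sup>+y. ennreal (gauss_kernel d P y / c) * (f y * ennreal (exp (y j - \<Gamma> j j / 2))) \<partial>lborel_vec d)"
    unfolding c_def by (rule nn_integral_gauss_prec) measurable
  also have "\<dots> = (\<integral>\<^sup>+y. g y \<partial>lborel_vec d)"
  proof (rule nn_integral_cong)
    fix y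
    have "ennreal (gauss_kernel d P y / c) * ennreal (exp (y j - \<Gamma> j j / 2)) =
        ennreal (gauss_kernel d P (\<lambda>i. y i - \<Gamma> i j) / c)"
      unfolding gauss_kernel_tilt[OF inv pos_def_mat_sym[OF pd] j, symmetric]
      using c gauss_kernel_pos[of d P y] by (simp add: ennreal_mult[symmetric])
    thus "ennreal (gauss_kernel d P y / c) * (f y * ennreal (exp (y j - \<Gamma> j j / 2))) = g y"
      unfolding g_def by (simp add: mult_ac)
  qed
  also have "\<dots> = (\<integral>\<^sup>+y. g (\<lambda>i\<in>{..<d}. \<Gamma> i j + 1 * y i) \<partial>lborel_vec d)"
    by (rule nn_integral_lborel_vec_affine[symmetric, OF _ gm]) simp
  also have "\<dots> = (\<integral>\<^sup>+y. ennreal (gauss_kernel d P y / c) * f (\<lambda>i\<in>{..<d}. y i + \<Gamma> i j) \<partial>lborel_vec d)"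
  proof (rule nn_integral_cong)
    fix y
    have kernel: "gauss_kernel d P (\<lambda>i. (\<lambda>i\<in>{..<d}. \<Gamma> i j + 1 * y i) i - \<Gamma> i j) = gauss_kernel d P y"
      unfolding gauss_kernel_def by (subst qform_cong[where y=y]) auto
    show "g (\<lambda>i\<in>{..<d}. \<Gamma> i j + 1 * y i) =
        ennreal (gauss_kernel d P y / c) * f (\<lambda>i\<in>{..<d}. y i + \<Gamma> i j)"
      unfolding g_def kernel by (simp add: add.commute)
  qed
  also have "\<dots> = (\<integral>\<^sup>+y. f (\<lambda>i\<in>{..<d}. y i + \<Gamma> i j) \<partial>gauss_prec d P)"
    unfolding c_def by (rule nn_integral_gauss_prec[symmetric]) measurable
  finally show ?thesis .
qed

lemma Min_eq_sum_first_argmin: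
  fixes f :: "nat \<Rightarrow> real"
  assumes d: "d > 0"
  shows "Min (f ` {..<d}) = (\<Sum>j<d. if \<forall>k<d. f j \<le> f k \<and> (k < j \<longrightarrow> f j < f k) then f j else 0)"
proof -
  have "Min (f ` {..<d}) \<in> f ` {..<d}" by (rule Min_in) (use d in auto)
  then obtain j where "j < d" "f j = Min (f ` {..<d})" by auto
  hence ex: "\<exists>j. j < d \<and> (\<forall>k<d. f j \<le> f k)" by (intro exI[of _ j]) auto
  define j0 where "j0 = (LEAST j. j < d \<and> (\<forall>k<d. f j \<le> f k))"
  have j0: "j0 < d" "\<forall>k<d. f j0 \<le> f k" using LeastI_ex[OF ex] unfolding j0_def by auto
  have least: "\<not> (\<forall>k<d. f j \<le> f k)" if "j < j0" for j
    using not_less_Least[of j "\<lambda>j. j < d \<and> (\<forall>k<d. f j \<le> f k)"] that j0(1) unfolding j0_def by auto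
  have first: "(\<forall>k<d. f j \<le> f k \<and> (k < j \<longrightarrow> f j < f k)) \<longleftrightarrow> j = j0" if "j < d" for j
  proof
    assume H: "\<forall>k<d. f j \<le> f k \<and> (k < j \<longrightarrow> f j < f k)"
    show "j = j0"
    proof (rule linorder_cases[of j j0])
      assume "j < j0" thus ?thesis using least[of j] H by auto
    next
      assume "j0 < j" thus ?thesis using H j0 that by (meson not_le)
    qed
  next
    assume "j = j0"
    thus "\<forall>k<d. f j \<le> f k \<and> (k < j \<longrightarrow> f j < f k)"
      using j0 least by (auto simp: not_less) (meson less_trans not_le order_trans)
  qed
  have "(\<Sum>j<d. if \<forall>k<d. f j \<le> f k \<and> (k < j \<longrightarrow> f j < f k) then f j else 0) =
      (\<Sum>j<d. if j = j0 then f j else 0)"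
    by (intro sum.cong refl) (simp add: first)
  also have "\<dots> = f j0" using j0(1) by simp
  also have "\<dots> = Min (f ` {..<d})" by (rule Min_eqI[symmetric]) (use j0 in auto)
  finally show ?thesis by simp
qed

lemma all_skip_iff:
  assumes j: "j \<le> n"
  shows "(\<forall>k<Suc n. k \<noteq> j \<longrightarrow> Q k) \<longleftrightarrow> (\<forall>i<n. Q (skip j i))"
proof
  assume "\<forall>k<Suc n. k \<noteq> j \<longrightarrow> Q k"
  thus "\<forall>i<n. Q (skip j i)" using skip_less_Suc skip_neq by blast
next
  assume H: "\<forall>i<n. Q (skip j i)"
  show "\<forall>k<Suc n. k \<noteq> j \<longrightarrow> Q k"
  proof (intro allI impI)
    fix k assume "k < Suc n" "k \<noteq> j"
    thus "Q k" using H move_to_last_less[OF j] skip_move_to_last[OF _ _ j] by metis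
  qed
qed

definition delta_bound :: "(nat \<Rightarrow> nat \<Rightarrow> real) \<Rightarrow> nat \<Rightarrow> nat \<Rightarrow> real" where
  "delta_bound \<Gamma> j i = - (\<Gamma> j j + \<Gamma> (skip j i) (skip j i) - 2 * \<Gamma> (skip j i) j) / 2"

text \<open>The strict bounds for \<open>i < j\<close> encode that ties are broken towards the least index.\<close>

lemma first_argmin_iff_deltas:
  fixes y :: "nat \<Rightarrow> real" and \<Gamma> :: "nat \<Rightarrow> nat \<Rightarrow> real"
  assumes j: "j \<le> n"
  defines "e \<equiv> \<lambda>k. y k - \<Gamma> k k / 2"
  shows "(\<forall>k<Suc n. e j \<le> e k \<and> (k < j \<longrightarrow> e j < e k)) \<longleftrightarrow>
    deltas j n (\<lambda>i. y i - \<Gamma> i j) \<in>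
      Pi\<^sub>E {..<n} (\<lambda>i. if i < j then {..<delta_bound \<Gamma> j i} else {..delta_bound \<Gamma> j i})"
proof -
  have le: "e j \<le> e k \<longleftrightarrow> (y j - \<Gamma> j j) - (y k - \<Gamma> k j) \<le> - (\<Gamma> j j + \<Gamma> k k - 2 * \<Gamma> k j) / 2"
    and less: "e j < e k \<longleftrightarrow> (y j - \<Gamma> j j) - (y k - \<Gamma> k j) < - (\<Gamma> j j + \<Gamma> k k - 2 * \<Gamma> k j) / 2"
    for k unfolding e_def by (simp_all add: field_simps, linarith+)
  have "(\<forall>k<Suc n. e j \<le> e k \<and> (k < j \<longrightarrow> e j < e k)) \<longleftrightarrow>
      (\<forall>k<Suc n. k \<noteq> j \<longrightarrow> e j \<le> e k \<and> (k < j \<longrightarrow> e j < e k))"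
    by auto
  also have "\<dots> \<longleftrightarrow> (\<forall>i<n. e j \<le> e (skip j i) \<and> (i < j \<longrightarrow> e j < e (skip j i)))"
    unfolding all_skip_iff[OF j] skip_less_iff ..
  also have "\<dots> \<longleftrightarrow> deltas j n (\<lambda>i. y i - \<Gamma> i j) \<in>
      Pi\<^sub>E {..<n} (\<lambda>i. if i < j then {..<delta_bound \<Gamma> j i} else {..delta_bound \<Gamma> j i})"
  proof -
    have "(e j \<le> e (skip j i) \<and> (i < j \<longrightarrow> e j < e (skip j i))) \<longleftrightarrow>
        (y j - \<Gamma> j j) - (y (skip j i) - \<Gamma> (skip j i) j) \<in>
        (if i < j then {..<delta_bound \<Gamma> j i} else {..delta_bound \<Gamma> j i})" for i
      unfolding le less delta_bound_def by auto
    thus ?thesis unfolding deltas_def restrict_PiE_iff by (simp only: Ball_def lessThan_iff)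
  qed
  finally show ?thesis .
qed

lemma Min_exp_eq_sum_indicator_deltas:
  fixes y :: "nat \<Rightarrow> real"
  shows "ennreal (Min ((\<lambda>j. exp (y j - \<Gamma> j j / 2)) ` {..<Suc n})) =
    (\<Sum>j<Suc n. indicator (Pi\<^sub>E {..<n} (\<lambda>i. if i < j then {..<delta_bound \<Gamma> j i} else {..delta_bound \<Gamma> j i}))
      (deltas j n (\<lambda>i. y i - \<Gamma> i j)) * ennreal (exp (y j - \<Gamma> j j / 2)))"
proof -
  define B where "B j = Pi\<^sub>E {..<n} (\<lambda>i. if i < j then {..<delta_bound \<Gamma> j i} else {..delta_bound \<Gamma> j i})" for j
  define w where "w j = exp (y j - \<Gamma> j j / 2)" for j
  have "Min (w ` {..<Suc n}) = (\<Sum>j<Suc n. if \<forall>k<Suc n. w j \<le> w k \<and> (k < j \<longrightarrow> w j < w k) then w j else 0)"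
    by (rule Min_eq_sum_first_argmin) simp
  also have "\<dots> = (\<Sum>j<Suc n. if deltas j n (\<lambda>i. y i - \<Gamma> i j) \<in> B j then w j else 0)"
  proof (rule sum.cong[OF refl])
    fix j assume "j \<in> {..<Suc n}"
    hence "j \<le> n" by simp
    thus "(if \<forall>k<Suc n. w j \<le> w k \<and> (k < j \<longrightarrow> w j < w k) then w j else 0) =
        (if deltas j n (\<lambda>i. y i - \<Gamma> i j) \<in> B j then w j else 0)"
      unfolding w_def B_def by (simp only: exp_le_cancel_iff exp_less_cancel_iff first_argmin_iff_deltas)
  qed
  finally have "ennreal (Min (w ` {..<Suc n})) =
      ennreal (\<Sum>j<Suc n. if deltas j n (\<lambda>i. y i - \<Gamma> i j) \<in> B j then w j else 0)"
    by (rule arg_cong)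
  also have "\<dots> = (\<Sum>j<Suc n. ennreal (if deltas j n (\<lambda>i. y i - \<Gamma> i j) \<in> B j then w j else 0))"
    by (rule sum_ennreal[symmetric]) (simp add: w_def)
  also have "\<dots> = (\<Sum>j<Suc n. indicator (B j) (deltas j n (\<lambda>i. y i - \<Gamma> i j)) * ennreal (w j))"
    by (intro sum.cong refl) (simp add: indicator_def)
  finally show ?thesis unfolding w_def B_def .
qed

lemma nn_integral_Min_exp_gauss_prec:
  assumes pd: "pos_def_mat (Suc n) P" and inv: "is_inv (Suc n) P \<Gamma>"
  shows "(\<integral>\<^sup>+y. ennreal (Min ((\<lambda>j. exp (y j - \<Gamma> j j / 2)) ` {..<Suc n})) \<partial>gauss_prec (Suc n) P) =
    (\<Sum>j<Suc n. emeasure (gauss_prec n (schur n (delta_prec j n P))) (Pi\<^sub>E {..<n} (\<lambda>i. {..delta_bound \<Gamma> j i})))"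
proof -
  define B where "B j = Pi\<^sub>E {..<n} (\<lambda>i. if i < j then {..<delta_bound \<Gamma> j i} else {..delta_bound \<Gamma> j i})" for j
  have ind[measurable]: "(\<lambda>u. indicator (B j) u :: ennreal) \<in> borel_measurable (lborel_vec n)" for j
    unfolding B_def by (intro borel_measurable_indicator sets_PiM_I_finite) auto
  have f[measurable]: "(\<lambda>y. indicator (B j) (deltas j n (\<lambda>i. y i - \<Gamma> i j)) :: ennreal)
      \<in> borel_measurable (lborel_vec (Suc n))" if "j \<le> n" for j
    using measurable_comp[OF deltas_shift_measurable[OF that] ind] by (simp add: comp_def)
  have "(\<integral>\<^sup>+y. ennreal (Min ((\<lambda>j. exp (y j - \<Gamma> j j / 2)) ` {..<Suc n})) \<partial>gauss_prec (Suc n) P) =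
      (\<Sum>j<Suc n. \<integral>\<^sup>+y. indicator (B j) (deltas j n (\<lambda>i. y i - \<Gamma> i j)) * ennreal (exp (y j - \<Gamma> j j / 2))
        \<partial>gauss_prec (Suc n) P)"
    unfolding Min_exp_eq_sum_indicator_deltas B_def[symmetric]
  proof (rule nn_integral_sum)
    fix j assume "j \<in> {..<Suc n}"
    hence j: "j < Suc n" "j \<le> n" by auto
    note [measurable] = measurable_component[OF j(1)] f[OF j(2)]
    show "(\<lambda>y. indicator (B j) (deltas j n (\<lambda>i. y i - \<Gamma> i j)) * ennreal (exp (y j - \<Gamma> j j / 2)))
        \<in> borel_measurable (gauss_prec (Suc n) P)" by measurable
  qed
  also have "\<dots> = (\<Sum>j<Suc n. \<integral>\<^sup>+y. indicator (B j) (deltas j n y) \<partial>gauss_prec (Suc n) P)"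
  proof (rule sum.cong[OF refl])
    fix j assume "j \<in> {..<Suc n}"
    hence j: "j < Suc n" "j \<le> n" by auto
    have "deltas j n (\<lambda>i. (\<lambda>i\<in>{..<Suc n}. y i + \<Gamma> i j) i - \<Gamma> i j) = deltas j n y" for y
      using j skip_less_Suc[of _ n j] by (auto simp: deltas_def)
    thus "(\<integral>\<^sup>+y. indicator (B j) (deltas j n (\<lambda>i. y i - \<Gamma> i j)) * ennreal (exp (y j - \<Gamma> j j / 2))
        \<partial>gauss_prec (Suc n) P) = (\<integral>\<^sup>+y. indicator (B j) (deltas j n y) \<partial>gauss_prec (Suc n) P)"
      by (subst nn_integral_gauss_prec_tilt[OF pd inv j(1) f[OF j(2)]]) simp
  qed
  also have "\<dots> = (\<Sum>j<Suc n. emeasure (gauss_prec n (schur n (delta_prec j n P)))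
      (Pi\<^sub>E {..<n} (\<lambda>i. {..delta_bound \<Gamma> j i})))"
    unfolding B_def by (intro sum.cong refl nn_integral_indicator_deltas[OF pd]) auto
  finally show ?thesis .
qed

section \<open>The Gaussian random vector\<close>

lemma covar_polarization:
  assumes "integrable M (\<lambda>\<omega>. (A \<omega> + B \<omega>)^2)" "integrable M (\<lambda>\<omega>. (A \<omega> - B \<omega>)^2)"
    and "(\<integral>\<omega>. A \<omega> \<partial>M) = 0" "(\<integral>\<omega>. B \<omega> \<partial>M) = 0"
  shows "covar M A B = ((\<integral>\<omega>. (A \<omega> + B \<omega>)^2 \<partial>M) - (\<integral>\<omega>. (A \<omega> - B \<omega>)^2 \<partial>M)) / 4"
proof -
  have "covar M A B = (\<integral>\<omega>. ((A \<omega> + B \<omega>)^2 - (A \<omega> - B \<omega>)^2) / 4 \<partial>M)"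
    unfolding covar_def assms(3,4)
    by (rule Bochner_Integration.integral_cong) (auto simp: power2_eq_square algebra_simps)
  thus ?thesis using assms(1,2) by simp
qed

lemma abs_le_one_plus_sq: "\<bar>x::real\<bar> \<le> 1 + x^2"
proof -
  have "0 \<le> (\<bar>x\<bar> - 1)^2" by simp
  hence "2 * \<bar>x\<bar> \<le> 1 + \<bar>x\<bar>^2" by (simp add: power2_eq_square algebra_simps)
  moreover have "\<bar>x\<bar> \<ge> 0" by simp
  ultimately show ?thesis by (simp add: power2_abs)
qed

lemma integrable_of_nn_integral_sq:
  assumes N: "prob_space N" and f[measurable]: "f \<in> borel_measurable N"
    and fin: "(\<integral>\<^sup>+x. ennreal ((f x)^2) \<partial>N) < \<infinity>"
  shows "integrable N (\<lambda>x. (f x)^2)" "integrable N f"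
proof -
  show i2: "integrable N (\<lambda>x. (f x)^2)" by (rule integrableI_nonneg) (use fin in auto)
  interpret prob_space N by fact
  have "integrable N (\<lambda>x. 1 + (f x)^2)" by (rule Bochner_Integration.integrable_add[OF _ i2]) simp
  thus "integrable N f"
    by (rule Bochner_Integration.integrable_bound) (auto intro!: AE_I2 simp: abs_le_one_plus_sq)
qed

lemma diff_measurable: "j < m \<Longrightarrow> k < m \<Longrightarrow> (\<lambda>y. y j - y k) \<in> borel_measurable (lborel_vec m)"
  by (intro borel_measurable_diff measurable_component)

locale centered_gauss_vec = prob_space M for M :: "'a measure" +
  fixes X :: "'a \<Rightarrow> nat \<Rightarrow> real" and n :: nat and \<Gamma> :: "nat \<Rightarrow> nat \<Rightarrow> real"
  assumes pos_def_cov: "pos_def_mat (Suc n) \<Gamma>"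
    and X_measurable: "X \<in> measurable M (lborel_vec (Suc n))"
    and distr_X: "distr M (lborel_vec (Suc n)) X = gauss_prec (Suc n) (mat_inv (Suc n) \<Gamma>)"
begin

abbreviation prec :: "nat \<Rightarrow> nat \<Rightarrow> real" where
  "prec \<equiv> mat_inv (Suc n) \<Gamma>"

lemma pos_def_prec: "pos_def_mat (Suc n) prec"
  by (rule pos_def_mat_mat_inv[OF pos_def_cov])

lemma is_inv_prec: "is_inv (Suc n) prec \<Gamma>"
  by (rule is_inv_swap[OF is_inv_mat_inv[OF pos_def_cov]])

lemma nn_integral_X:
  "g \<in> borel_measurable (lborel_vec (Suc n)) \<Longrightarrow>
    (\<integral>\<^sup>+\<omega>. g (X \<omega>) \<partial>M) = (\<integral>\<^sup>+y. g y \<partial>gauss_prec (Suc n) prec)"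
  using nn_integral_distr[OF X_measurable, of g] distr_X by simp

lemma integral_X:
  fixes g :: "(nat \<Rightarrow> real) \<Rightarrow> real"
  shows "g \<in> borel_measurable (lborel_vec (Suc n)) \<Longrightarrow>
    (\<integral>\<omega>. g (X \<omega>) \<partial>M) = (\<integral>y. g y \<partial>gauss_prec (Suc n) prec)"
  using integral_distr[OF X_measurable, of g] distr_X by simp

lemma integrable_X:
  fixes g :: "(nat \<Rightarrow> real) \<Rightarrow> real"
  shows "g \<in> borel_measurable (lborel_vec (Suc n)) \<Longrightarrow> integrable (gauss_prec (Suc n) prec) g \<Longrightarrow>
    integrable M (\<lambda>\<omega>. g (X \<omega>))"
  using integrable_distr_eq[OF X_measurable, of g] distr_X by simp

lemma nn_integral_sq_diff:
  assumes j: "j < Suc n" and k: "k < Suc n"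
  shows "(\<integral>\<^sup>+y. ennreal ((y j - y k)^2) \<partial>gauss_prec (Suc n) prec) = ennreal (\<Gamma> j j + \<Gamma> k k - \<Gamma> j k - \<Gamma> k j)"
  using nn_integral_lform_sq[OF pos_def_prec is_inv_prec, of "\<lambda>a. (if a = j then 1 else 0) - (if a = k then 1 else 0)"]
  unfolding lform_diff_unit[OF j k] qform_diff_unit[OF j k] .

lemma diff_X:
  assumes j: "j < Suc n" and k: "k < Suc n"
  shows "(\<integral>\<omega>. X \<omega> j - X \<omega> k \<partial>M) = 0"
    and "integrable M (\<lambda>\<omega>. (X \<omega> j - X \<omega> k)^2)"
proof -
  interpret G: prob_space "gauss_prec (Suc n) prec" by (rule prob_space_gauss_prec[OF pos_def_prec])
  note dm = diff_measurable[OF j k]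
  have fin: "(\<integral>\<^sup>+y. ennreal ((y j - y k)^2) \<partial>gauss_prec (Suc n) prec) < \<infinity>"
    by (simp add: nn_integral_sq_diff[OF j k])
  have "integrable (gauss_prec (Suc n) prec) (\<lambda>y. y j - y k)"
    by (rule integrable_of_nn_integral_sq(2)[OF G.prob_space_axioms _ fin]) (use dm in simp)
  hence "(\<integral>y. lform (Suc n) (\<lambda>a. (if a = j then 1 else 0) - (if a = k then 1 else 0)) y
      \<partial>gauss_prec (Suc n) prec) = 0"
    by (intro integral_lform_gauss_prec) (simp add: lform_diff_unit[OF j k])
  thus "(\<integral>\<omega>. X \<omega> j - X \<omega> k \<partial>M) = 0" by (simp add: integral_X[OF dm] lform_diff_unit[OF j k])
  have "integrable (gauss_prec (Suc n) prec) (\<lambda>y. (y j - y k)^2)"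
    by (rule integrable_of_nn_integral_sq(1)[OF G.prob_space_axioms _ fin]) (use dm in simp)
  thus "integrable M (\<lambda>\<omega>. (X \<omega> j - X \<omega> k)^2)" using integrable_X[of "\<lambda>y. (y j - y k)^2"] dm by simp
qed

lemma var_delta:
  assumes j: "j \<le> n" and i: "i < n"
  shows "var M (\<lambda>\<omega>. X \<omega> j - X \<omega> (skip j i)) = - 2 * delta_bound \<Gamma> j i"
proof -
  define k where "k = skip j i"
  have jk: "j < Suc n" "k < Suc n" using j skip_less_Suc[OF i] unfolding k_def by auto
  have "var M (\<lambda>\<omega>. X \<omega> j - X \<omega> k) = (\<integral>y. (y j - y k)^2 \<partial>gauss_prec (Suc n) prec)"
    unfolding var_def covar_def diff_X(1)[OF jk]
    by (simp add: power2_eq_square integral_X[OF borel_measurable_times[OF diff_measurable[OF jk] diff_measurable[OF jk]]])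
  also have "\<dots> = enn2real (\<integral>\<^sup>+y. ennreal ((y j - y k)^2) \<partial>gauss_prec (Suc n) prec)"
    by (rule integral_eq_nn_integral) (use diff_measurable[OF jk] in auto)
  also have "\<dots> = \<Gamma> j j + \<Gamma> k k - \<Gamma> j k - \<Gamma> k j"
    using pos_def_mat_qform_nonneg[OF pos_def_cov, of "\<lambda>a. (if a = j then 1 else 0) - (if a = k then 1 else 0)"]
    by (simp add: nn_integral_sq_diff[OF jk] qform_diff_unit[OF jk])
  also have "\<dots> = - 2 * delta_bound \<Gamma> j i"
    using pos_def_mat_sym[OF pos_def_cov] jk unfolding sym_mat_def delta_bound_def k_def by simp
  finally show ?thesis unfolding k_def .
qed

lemma nn_integral_sq_lform_deltas:
  assumes j: "j \<le> n"
  shows "(\<integral>\<^sup>+\<omega>. ennreal ((\<Sum>i<n. c i * (X \<omega> j - X \<omega> (skip j i)))^2) \<partial>M)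
       = ennreal (qform n (mat_inv (Suc n) (delta_prec j n prec)) c)"
proof -
  let ?Q = "delta_prec j n prec"
  let ?S = "mat_inv (Suc n) ?Q"
  have pdQ: "pos_def_mat (Suc n) ?Q" by (rule pos_def_mat_delta_prec[OF pos_def_prec j])
  define c' where "c' a = (if a < n then c a else 0)" for a
  have sum_deltas: "(\<Sum>i<n. c i * (y j - y (skip j i))) = lform n c (deltas j n y)" for y
    unfolding lform_def deltas_def by simp
  have m: "(\<lambda>y. ennreal ((lform n c (deltas j n y))^2)) \<in> borel_measurable (lborel_vec (Suc n))"
    using measurable_comp[OF deltas_measurable[OF j] lform_measurable[of n c]] by (simp add: comp_def)
  have "(\<integral>\<^sup>+\<omega>. ennreal ((\<Sum>i<n. c i * (X \<omega> j - X \<omega> (skip j i)))^2) \<partial>M)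
      = (\<integral>\<^sup>+z. ennreal ((lform n c (deltas j n (undelta j n z)))^2) \<partial>gauss_prec (Suc n) ?Q)"
    unfolding sum_deltas nn_integral_X[OF m] by (rule nn_integral_gauss_prec_undelta[OF pos_def_prec j m])
  also have "\<dots> = (\<integral>\<^sup>+z. ennreal ((lform (Suc n) c' z)^2) \<partial>gauss_prec (Suc n) ?Q)"
    unfolding deltas_undelta[OF j] by (simp add: lform_def c'_def)
  also have "\<dots> = ennreal (qform (Suc n) ?S c')" by (rule nn_integral_lform_sq[OF pdQ is_inv_mat_inv[OF pdQ]])
  also have "qform (Suc n) ?S c' = qform n ?S c"
    using qform_cong[of n c' c] by (simp add: qform_Suc c'_def)
  finally show ?thesis .
qed

lemma integral_sq_lform_deltas:
  assumes j: "j \<le> n"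
  shows "integrable M (\<lambda>\<omega>. (\<Sum>i<n. c i * (X \<omega> j - X \<omega> (skip j i)))^2)"
    and "(\<integral>\<omega>. (\<Sum>i<n. c i * (X \<omega> j - X \<omega> (skip j i)))^2 \<partial>M) =
      qform n (mat_inv (Suc n) (delta_prec j n prec)) c"
proof -
  let ?Q = "delta_prec j n prec"
  have pdQ: "pos_def_mat (Suc n) ?Q" by (rule pos_def_mat_delta_prec[OF pos_def_prec j])
  have pdS: "pos_def_mat n (mat_inv (Suc n) ?Q)"
    using pos_def_mat_is_inv[OF pos_def_mat_schur[OF pdQ] is_inv_schur[OF is_inv_mat_inv[OF pdQ]]]
      pos_def_mat_diag_pos[OF pdQ] by simp
  have "(\<lambda>y. \<Sum>i<n. c i * (y j - y (skip j i))) \<in> borel_measurable (lborel_vec (Suc n))"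
    using j skip_less_Suc[of _ n j]
    by (intro borel_measurable_sum borel_measurable_times borel_measurable_const diff_measurable) auto
  from measurable_comp[OF X_measurable this]
  have m: "(\<lambda>\<omega>. \<Sum>i<n. c i * (X \<omega> j - X \<omega> (skip j i))) \<in> borel_measurable M" by (simp add: comp_def)
  note nn = nn_integral_sq_lform_deltas[OF j, of c]
  show "integrable M (\<lambda>\<omega>. (\<Sum>i<n. c i * (X \<omega> j - X \<omega> (skip j i)))^2)"
    by (rule integrable_of_nn_integral_sq(1)[OF prob_space_axioms]) (use m nn in auto)
  have "(\<integral>\<omega>. (\<Sum>i<n. c i * (X \<omega> j - X \<omega> (skip j i)))^2 \<partial>M) =
      enn2real (\<integral>\<^sup>+\<omega>. ennreal ((\<Sum>i<n. c i * (X \<omega> j - X \<omega> (skip j i)))^2) \<partial>M)"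
    by (rule integral_eq_nn_integral) (use m in auto)
  thus "(\<integral>\<omega>. (\<Sum>i<n. c i * (X \<omega> j - X \<omega> (skip j i)))^2 \<partial>M) = qform n (mat_inv (Suc n) ?Q) c"
    using nn pos_def_mat_qform_nonneg[OF pdS] by simp
qed

lemma covar_deltas:
  assumes j: "j \<le> n" and i: "i < n" and l: "l < n"
  shows "covar M (\<lambda>\<omega>. X \<omega> j - X \<omega> (skip j i)) (\<lambda>\<omega>. X \<omega> j - X \<omega> (skip j l)) =
    mat_inv (Suc n) (delta_prec j n prec) i l"
proof -
  let ?Q = "delta_prec j n prec"
  let ?S = "mat_inv (Suc n) ?Q"
  have pdQ: "pos_def_mat (Suc n) ?Q" by (rule pos_def_mat_delta_prec[OF pos_def_prec j])
  have "sym_mat (Suc n) ?S" by (rule is_inv_sym[OF is_inv_mat_inv[OF pdQ] pos_def_mat_sym[OF pdQ]])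
  hence syS: "sym_mat n ?S" unfolding sym_mat_def by auto
  have jj: "j < Suc n" using j by simp
  define A where "A \<omega> = X \<omega> j - X \<omega> (skip j i)" for \<omega>
  define B where "B \<omega> = X \<omega> j - X \<omega> (skip j l)" for \<omega>
  have comb: "(\<Sum>a<n. ((if a = i then 1 else 0) + s * (if a = l then 1 else 0)) * (X \<omega> j - X \<omega> (skip j a))) =
      A \<omega> + s * B \<omega>" for s \<omega>
    unfolding A_def B_def by (rule sum_unit_comb[OF i l])
  have sq: "integrable M (\<lambda>\<omega>. (A \<omega> + s * B \<omega>)^2)"
    "(\<integral>\<omega>. (A \<omega> + s * B \<omega>)^2 \<partial>M) = qform n ?S (\<lambda>a. (if a = i then 1 else 0) + s * (if a = l then 1 else 0))"
    for s :: real
    using integral_sq_lform_deltas[OF j, of "\<lambda>a. (if a = i then 1 else 0) + s * (if a = l then 1 else 0)"]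
    unfolding comb by simp_all
  have "covar M A B = ((\<integral>\<omega>. (A \<omega> + 1 * B \<omega>)^2 \<partial>M) - (\<integral>\<omega>. (A \<omega> + (- 1) * B \<omega>)^2 \<partial>M)) / 4"
    using covar_polarization[of M A B] sq(1)[of 1] sq(1)[of "- 1"]
      diff_X(1)[OF jj skip_less_Suc[OF i]] diff_X(1)[OF jj skip_less_Suc[OF l]]
    unfolding A_def B_def by simp
  also have "\<dots> = ?S i l"
    using sq(2)[of 1] sq(2)[of "- 1"] qform_polarization_unit[OF syS i l] by simp
  finally show ?thesis unfolding A_def B_def .
qed

lemma Phi_deltas:
  assumes j: "j \<le> n"
  shows "Phi n (\<lambda>i. - (1 / 2) * var M (\<lambda>\<omega>. X \<omega> j - X \<omega> (skip j i)))
        (\<lambda>i l. covar M (\<lambda>\<omega>. X \<omega> j - X \<omega> (skip j i)) (\<lambda>\<omega>. X \<omega> j - X \<omega> (skip j l)))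
     = measure (gauss_prec n (schur n (delta_prec j n prec))) (Pi\<^sub>E {..<n} (\<lambda>i. {..delta_bound \<Gamma> j i}))"
proof -
  let ?Q = "delta_prec j n prec"
  define C where "C i l = covar M (\<lambda>\<omega>. X \<omega> j - X \<omega> (skip j i)) (\<lambda>\<omega>. X \<omega> j - X \<omega> (skip j l))" for i l
  have pdQ: "pos_def_mat (Suc n) ?Q" by (rule pos_def_mat_delta_prec[OF pos_def_prec j])
  have "?Q n n \<noteq> 0" using pos_def_mat_diag_pos[OF pdQ] by simp
  hence "is_inv n (schur n ?Q) (mat_inv (Suc n) ?Q)" by (rule is_inv_schur[OF is_inv_mat_inv[OF pdQ]])
  hence invC: "is_inv n (schur n ?Q) C" by (rule is_inv_cong) (simp add: C_def covar_deltas[OF j])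
  have pdC: "pos_def_mat n C" by (rule pos_def_mat_is_inv[OF pos_def_mat_schur[OF pdQ] invC])
  have "gauss_measure n C = gauss_prec n (schur n ?Q)"
    unfolding gauss_measure_eq[OF pdC]
    by (rule gauss_prec_cong) (rule is_inv_unique[OF is_inv_mat_inv[OF pdC] is_inv_swap[OF invC]])
  moreover have "{x \<in> space (lborel_vec n). \<forall>i<n. x i \<le> - (1 / 2) * var M (\<lambda>\<omega>. X \<omega> j - X \<omega> (skip j i))}
      = Pi\<^sub>E {..<n} (\<lambda>i. {..delta_bound \<Gamma> j i})"
    by (auto simp: var_delta[OF j] space_PiM PiE_def Pi_def)
  ultimately show ?thesis unfolding Phi_def C_def[symmetric] by simp
qed

lemma integral_Min_exp:
  "(\<integral>\<omega>. Min ((\<lambda>j. exp (X \<omega> j - \<Gamma> j j / 2)) ` {..<Suc n}) \<partial>M) =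
    (\<Sum>j<Suc n. measure (gauss_prec n (schur n (delta_prec j n prec))) (Pi\<^sub>E {..<n} (\<lambda>i. {..delta_bound \<Gamma> j i})))"
proof -
  define m where "m y = Min ((\<lambda>j. exp (y j - \<Gamma> j j / 2)) ` {..<Suc n})" for y :: "nat \<Rightarrow> real"
  have mm: "m \<in> borel_measurable (lborel_vec (Suc n))"
    unfolding m_def by (rule borel_measurable_Min) (auto intro!: borel_measurable_exp borel_measurable_diff measurable_component)
  have m_nonneg: "0 \<le> m y" for y unfolding m_def by (subst Min_ge_iff) auto
  have prob: "prob_space (gauss_prec n (schur n (delta_prec j n prec)))" if "j < Suc n" for j
    using that by (intro prob_space_gauss_prec pos_def_mat_schur pos_def_mat_delta_prec[OF pos_def_prec]) simp
  have "(\<integral>\<omega>. m (X \<omega>) \<partial>M) = enn2real (\<integral>\<^sup>+y. ennreal (m y) \<partial>gauss_prec (Suc n) prec)"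
    unfolding integral_X[OF mm]
    by (rule integral_eq_nn_integral) (use mm m_nonneg in auto)
  also have "\<dots> = enn2real (\<Sum>j<Suc n. ennreal (measure (gauss_prec n (schur n (delta_prec j n prec)))
      (Pi\<^sub>E {..<n} (\<lambda>i. {..delta_bound \<Gamma> j i}))))"
    unfolding m_def nn_integral_Min_exp_gauss_prec[OF pos_def_prec is_inv_prec]
    by (intro arg_cong[where f=enn2real] sum.cong refl finite_measure.emeasure_eq_measure prob_space.finite_measure prob) simp
  also have "\<dots> = (\<Sum>j<Suc n. measure (gauss_prec n (schur n (delta_prec j n prec))) (Pi\<^sub>E {..<n} (\<lambda>i. {..delta_bound \<Gamma> j i})))"
    by (simp add: sum_ennreal sum_nonneg del: sum.lessThan_Suc)
  finally show ?thesis unfolding m_def .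
qed

end

theorem lemmaB1:
  fixes M :: "'a measure" and X :: "'a \<Rightarrow> nat \<Rightarrow> real"
    and d :: nat and \<Gamma> :: "nat \<Rightarrow> nat \<Rightarrow> real"
  assumes "prob_space M"
    and "d \<ge> 2"
    and "pos_def_mat d \<Gamma>"
    and "distributed M (PiM {..<d} (\<lambda>_. lborel)) X (\<lambda>x. ennreal (gauss_density d \<Gamma> x))"
  shows "(\<integral>\<omega>. Min ((\<lambda>j. exp (X \<omega> j - \<Gamma> j j / 2)) ` {..<d}) \<partial>M) =
    (\<Sum>j<d. Phi (d - 1)
        (\<lambda>i. - (1 / 2) * var M (\<lambda>\<omega>. X \<omega> j - X \<omega> (skip j i)))
        (\<lambda>i l. covar M (\<lambda>\<omega>. X \<omega> j - X \<omega> (skip j i)) (\<lambda>\<omega>. X \<omega> j - X \<omega> (skip j l))))"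
proof -
  obtain n where d: "d = Suc n" using assms(2) by (cases d) auto
  have pd: "pos_def_mat (Suc n) \<Gamma>" using assms(3) d by simp
  interpret centered_gauss_vec M X n \<Gamma>
  proof (intro centered_gauss_vec.intro centered_gauss_vec_axioms.intro)
    show "X \<in> measurable M (lborel_vec (Suc n))" using distributed_measurable[OF assms(4)] d by simp
    show "distr M (lborel_vec (Suc n)) X = gauss_prec (Suc n) (mat_inv (Suc n) \<Gamma>)"
      using distributed_distr_eq_density[OF assms(4)] d gauss_density_eq[OF pd] by (simp add: gauss_prec_def)
  qed fact+
  show ?thesis
    unfolding d diff_Suc_1 integral_Min_exp by (intro sum.cong refl Phi_deltas[symmetric]) simp
qed

end
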